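(* Let $(k_i)_{i\in\mathbb N}\subset\mathbb N=\{1,2,3,\dots\}$ be the coding sequence of an interval translation map $T_{\alpha,\beta}$ of infinite type, and let $(X,\sigma)$ be the associated $S$-adic subshift. Then $(X,\sigma)$ is linearly recurrent if and only if $(k_i)_{i\in\mathbb N}$ is bounded and both sets $\{i : k_{2i}>1\}$ and $\{i : k_{2i-1}>1\}$ have bounded gaps.
   Context: For $0<\beta\le\alpha\le 1$ let $T_{\alpha,\beta}:[0,1]\to[0,1]$ be $T_{\alpha,\beta}(x)=x+\alpha$ on $[0,1-\alpha)$, $x+\beta$ on $[1-\alpha,1-\beta)$, $x-1+\beta$ on $[1-\beta,1]$. Let $U=\{(\alpha,\beta):0<\beta\le\alpha\le 1\}$ and $G(\alpha,\beta)=\big(\beta/\alpha,\ (\beta-1)/\alpha+\lfloor 1/\alpha\rfloor\big)$. The map $T_{\alpha,\beta}$ is of infinite type if $G^n(\alpha,\beta)$ lies in the interior of $U$ for all $n\ge 0$; then $\Omega=\bigcap_{n\ge0}\overline{T^n_{\alpha,\beta}([0,1])}$ is a Cantor set. The coding sequence is $k_i=\lfloor 1/\alpha_i\rfloor$ where $(\alpha_i,\beta_i)=G^{i-1}(\alpha,\beta)$; coding sequences of infinite type maps are exactly the sequences in $\mathbb N$ with $k_{2i}>1$ for infinitely many $i$ and $k_{2i-1}>1$ for infinitely many $i$. For $k\in\mathbb N$ let $\chi_k$ be the substitution on $\{1,2,3\}$ given by $1\mapsto 2$, $2\mapsto 31^k$, $3\mapsto 31^{k-1}$. Let $\rho=\lim_{i\to\infty}\chi_{k_1}\circ\cdots\circ\chi_{k_i}(3)$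 (the itinerary of the point $1$ with respect to the partition $[0,1-\alpha),[1-\alpha,1-\beta),[1-\beta,1]$ coded by $1,2,3$), and let $X$ be the closure of $\{\sigma^n\rho\}_{n\in\mathbb N}$ under the left shift $\sigma$; $(\Omega,T_{\alpha,\beta})$ is isomorphic to $(X,\sigma)$. A subshift $(X,\sigma)$ is linearly recurrent if there is $L$ such that for every $x\in X$ every subword $w$ of $x$ reappears in $x$ with gap at most $L|w|$. *)

theory Defs
  imports "HOL-Analysis.Analysis"
begin

text \<open>Words over the alphabet {1,2,3} are lists of naturals; infinite words are
  functions nat => nat (positions indexed from 0), carrying the product topology
  of the discrete space nat.\<close>

fun chi :: "nat \<Rightarrow> nat \<Rightarrow> nat list" where
  "chi k a = (if a = 1 then [2]
              else if a = 2 then 3 # replicate k 1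
              else if a = 3 then 3 # replicate (k - 1) 1
              else [])"

definition subst_word :: "nat \<Rightarrow> nat list \<Rightarrow> nat list" where
  "subst_word k w = concat (map (chi k) w)"

definition comp_word :: "(nat \<Rightarrow> nat) \<Rightarrow> nat \<Rightarrow> nat list" where
  "comp_word k i = foldr (\<lambda>j w. subst_word (k j) w) [1..<Suc i] [3]"

definition rho :: "(nat \<Rightarrow> nat) \<Rightarrow> nat \<Rightarrow> nat" where
  "rho k n = (THE a. \<exists>i0. \<forall>i\<ge>i0. n < length (comp_word k i) \<and> comp_word k i ! n = a)"

definition shift :: "(nat \<Rightarrow> nat) \<Rightarrow> nat \<Rightarrow> nat" where
  "shift x = (\<lambda>m. x (Suc m))"

definition subshift :: "(nat \<Rightarrow> nat) \<Rightarrow> (nat \<Rightarrow> nat) set" where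
  "subshift k = closure {(shift ^^ n) (rho k) | n. n \<ge> 1}"

definition linearly_recurrent :: "(nat \<Rightarrow> nat) set \<Rightarrow> bool" where
  "linearly_recurrent X \<longleftrightarrow> (\<exists>L::nat. \<forall>x\<in>X. \<forall>i n. n > 0 \<longrightarrow>
      (\<exists>j. i < j \<and> j \<le> i + L * n \<and> (\<forall>m<n. x (j + m) = x (i + m))))"

definition bounded_gaps :: "nat set \<Rightarrow> bool" where
  "bounded_gaps S \<longleftrightarrow> (\<exists>g. \<forall>n. \<exists>i\<in>S. n < i \<and> i \<le> n + g)"

text \<open>Coding sequences of infinite type interval translation maps (as characterized
  in the paper): k_i >= 1, and k_{2i} > 1 resp. k_{2i-1} > 1 for infinitely many i.
  The sequence is indexed from 1; the value k 0 is irrelevant.\<close>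
definition infinite_type_coding :: "(nat \<Rightarrow> nat) \<Rightarrow> bool" where
  "infinite_type_coding k \<longleftrightarrow> (\<forall>i\<ge>1. k i \<ge> 1)
     \<and> infinite {i. i \<ge> 1 \<and> k (2 * i) > 1}
     \<and> infinite {i. i \<ge> 1 \<and> k (2 * i - 1) > 1}"

end

theory Submission
  imports Defs
begin

(* Write \<sigma>[j, d] = subst_iter k j d for \<chi>_(k j) \<circ> ... \<circ> \<chi>_(k (j + d - 1)), so that \<rho> is
  the limit of \<sigma>[1, D](3). The images \<sigma>[1, d](c) of the letters are the blocks of level d,
  and \<rho> is the concatenation of the blocks of level d of the letters of the limit word of
  level d + 1. Blocks are
  recognizable: a block starts at every letter 2 or 3 of \<rho>, and a block image of a word
  ending in 1 or 2 determines that word. Hence, if \<rho> is linearly recurrent with constant L,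
  every occurrence of a word at level d + 1 recurs at a place whose image lies at most L times
  the length of its image further on.

  If some k a exceeds 2 L, then \<sigma>[a - 1, 2](2) ends with a run of k a letters 2 preceded by
  a letter x, and x 2 cannot return before the end of the run. If k (j + 2 l) = 1 for
  l = 1, ..., 2 L, then at level j + 1 the letter 2 occurs only at the ends of the blocks
  of level 4 L, after a stretch whose image at level 1 is longer than L copies of the image
  of 2. Conversely, for bounded k with both parities of indices with k > 1 in every window
  of length H, every block of level 2 H + 4 contains all letters and all blocks at nearby
  levels have comparable lengths; a window of length n of \<rho> then returns inside the next
  block of a level whose blocks have length of order n. *)

section \<open>Iterated substitutions\<close>

declare chi.simps [simp del]

lemma chi_1 [simp]: "chi c (Suc 0) = [2]"
  and chi_2 [simp]: "chi c 2 = 3 # replicate c 1"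
  and chi_3 [simp]: "chi c 3 = 3 # replicate (c - 1) 1"
  by (simp_all add: chi.simps)

lemma set_chi: "set (chi c a) \<subseteq> {1,2,3}"
  by (auto simp: chi.simps)

lemma subst_word_Nil [simp]: "subst_word c [] = []"
  and subst_word_Cons [simp]: "subst_word c (a # w) = chi c a @ subst_word c w"
  and subst_word_append [simp]: "subst_word c (u @ v) = subst_word c u @ subst_word c v"
  by (simp_all add: subst_word_def)

lemma set_subst_word: "set (subst_word c w) = (\<Union>a\<in>set w. set (chi c a))"
  by (simp add: subst_word_def)

lemma set_subst_word_subset: "set (subst_word c w) \<subseteq> {1,2,3}"
  using set_chi by (auto simp: set_subst_word)

lemma subst_word_ne_Nil: "set w \<subseteq> {1,2,3} \<Longrightarrow> w \<noteq> [] \<Longrightarrow> subst_word c w \<noteq> []"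
  by (cases w) auto

lemma hd_subst_word: "set w \<subseteq> {1,2,3} \<Longrightarrow> w \<noteq> [] \<Longrightarrow> hd (subst_word c w) \<in> {2,3}"
  by (cases w) (auto simp: hd_append)

lemma subst_word_replicate_1: "subst_word c (replicate K 1) = replicate K 2"
  by (induction K) auto

lemma length_subst_word_le: "length (subst_word c W) \<le> (c + 1) * length W"
proof (induction W)
  case (Cons a W)
  have "length (chi c a) \<le> c + 1"
    by (simp add: chi.simps)
  with Cons show ?case
    by simp
qed simp

fun subst_iter :: "(nat \<Rightarrow> nat) \<Rightarrow> nat \<Rightarrow> nat \<Rightarrow> nat list \<Rightarrow> nat list" where
  "subst_iter k j 0 w = w"
| "subst_iter k j (Suc d) w = subst_word (k j) (subst_iter k (Suc j) d w)"

lemma subst_iter_Nil [simp]: "subst_iter k j d [] = []"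
  by (induction d arbitrary: j) auto

lemma subst_iter_append [simp]:
  "subst_iter k j d (u @ v) = subst_iter k j d u @ subst_iter k j d v"
  by (induction d arbitrary: j) auto

lemma subst_iter_Cons: "subst_iter k j d (a # w) = subst_iter k j d [a] @ subst_iter k j d w"
  using subst_iter_append[of k j d "[a]" w] by simp

lemma subst_iter_concat: "subst_iter k j d w = concat (map (\<lambda>a. subst_iter k j d [a]) w)"
  by (induction w) (simp, subst subst_iter_Cons, simp)

lemma length_subst_iter_replicate:
  "length (subst_iter k j d (replicate r a)) = r * length (subst_iter k j d [a])"
  by (induction r) (simp, subst replicate_Suc, subst subst_iter_Cons, simp)

lemma length_subst_iter_Cons_replicate:
  "length (subst_iter k j d (a # replicate r b)) =
     length (subst_iter k j d [a]) + r * length (subst_iter k j d [b])"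
  using subst_iter_Cons[of k j d a "replicate r b"] length_subst_iter_replicate[of k j d r b]
  by simp

lemma subst_iter_add: "subst_iter k j (a + b) w = subst_iter k j a (subst_iter k (j + a) b w)"
  by (induction a arbitrary: j) auto

lemma subst_iter_split:
  "a + b = d \<Longrightarrow> j + a = j' \<Longrightarrow> subst_iter k j d w = subst_iter k j a (subst_iter k j' b w)"
  using subst_iter_add[of k j a b w] by simp

lemma subst_iter_blocks:
  assumes "e \<le> D"
  shows "subst_iter k j D w =
    concat (map (\<lambda>c. subst_iter k j e [c]) (subst_iter k (j + e) (D - e) w))"
proof -
  have "subst_iter k j D w = subst_iter k j e (subst_iter k (j + e) (D - e) w)"
    by (rule subst_iter_split) (use assms in auto)
  also have "\<dots> = concat (map (\<lambda>c. subst_iter k j e [c]) (subst_iter k (j + e) (D - e) w))"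
    by (rule subst_iter_concat)
  finally show ?thesis .
qed

lemma subst_iter_2: "subst_iter k j 2 w = subst_word (k j) (subst_word (k (Suc j)) w)"
  by (simp add: numeral_2_eq_2)

lemma subst_iter_Suc_inner:
  "subst_iter k j (Suc d) w = subst_iter k j d (subst_word (k (j + d)) w)"
  using subst_iter_add[of k j d 1 w] by simp

lemma comp_word_eq_subst_iter: "comp_word k i = subst_iter k 1 i [3]"
proof -
  have "foldr (\<lambda>i w. subst_word (k i) w) [j..<j + d] w = subst_iter k j d w" for j d w
  proof (induction d arbitrary: j)
    case (Suc d)
    have "[j..<j + Suc d] = j # [Suc j..<Suc j + d]"
      by (simp add: upt_rec)
    then show ?case
      using Suc[of "Suc j"] by (simp del: upt_Suc)
  qed simp
  from this[of 1 i "[3]"] show ?thesis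
    by (simp add: comp_word_def)
qed

lemma set_subst_iter_subset: "set w \<subseteq> {1,2,3} \<Longrightarrow> set (subst_iter k j d w) \<subseteq> {1,2,3}"
  using set_subst_word_subset by (cases d) simp_all

lemma subst_iter_ne_Nil: "set w \<subseteq> {1,2,3} \<Longrightarrow> w \<noteq> [] \<Longrightarrow> subst_iter k j d w \<noteq> []"
proof (induction d arbitrary: j)
  case (Suc d)
  then show ?case
    using subst_word_ne_Nil set_subst_iter_subset by simp
qed simp

lemma length_subst_iter_letter_pos: "a \<in> {1,2,3} \<Longrightarrow> 0 < length (subst_iter k j d [a])"
  using subst_iter_ne_Nil[of "[a]"] by simp

lemma length_subst_iter_take_mono:
  "t \<le> t' \<Longrightarrow> length (subst_iter k j d (take t V)) \<le> length (subst_iter k j d (take t' V))"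
  by (metis append_take_drop_id length_append le_add1 min.absorb1 subst_iter_append take_take)

lemma length_subst_iter_take_Suc:
  "r < length U \<Longrightarrow> length (subst_iter k j d (take (Suc r) U)) =
     length (subst_iter k j d (take r U)) + length (subst_iter k j d [U ! r])"
  by (simp add: take_Suc_conv_app_nth)

lemma length_subst_iter_take_pos:
  assumes "set V \<subseteq> {1,2,3}" "0 < t" "t \<le> length V"
  shows "0 < length (subst_iter k j d (take t V))"
proof -
  have "set (take t V) \<subseteq> {1,2,3}" "take t V \<noteq> []"
    using assms set_take_subset[of t V] by auto
  then show ?thesis
    using subst_iter_ne_Nil by blast
qed

lemma take_length_subst_iter_take:
  "take (length (subst_iter k j d (take r U))) (subst_iter k j d U) = subst_iter k j d (take r U)"
  and drop_length_subst_iter_take: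
  "drop (length (subst_iter k j d (take r U))) (subst_iter k j d U) = subst_iter k j d (drop r U)"
proof -
  have "subst_iter k j d U = subst_iter k j d (take r U) @ subst_iter k j d (drop r U)"
    by (simp flip: subst_iter_append)
  then show "take (length (subst_iter k j d (take r U))) (subst_iter k j d U) = subst_iter k j d (take r U)"
    and "drop (length (subst_iter k j d (take r U))) (subst_iter k j d U) = subst_iter k j d (drop r U)"
    by simp_all
qed

lemma length_subst_iter_le_pow:
  assumes "\<forall>i\<ge>1. k i \<le> B" "1 \<le> j"
  shows "length (subst_iter k j d W) \<le> (B + 1) ^ d * length W"
  using assms(2)
proof (induction d arbitrary: j)
  case (Suc d)
  have "length (subst_iter k j (Suc d) W) \<le> (k j + 1) * length (subst_iter k (Suc j) d W)"
    using length_subst_word_le by (simp add: subst_iter.simps)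
  also have "\<dots> \<le> (B + 1) * ((B + 1) ^ d * length W)"
    using Suc assms(1) by (intro mult_le_mono) auto
  also have "\<dots> = (B + 1) ^ Suc d * length W"
    by (simp only: power_Suc mult.assoc)
  finally show ?case .
qed simp

lemma length_subst_iter_le_mult:
  "\<forall>e\<in>set W. length (subst_iter k j d [e]) \<le> n \<Longrightarrow> length (subst_iter k j d W) \<le> n * length W"
proof (induction W)
  case (Cons a W)
  then show ?case
    using subst_iter_Cons[of k j d a W] by simp
qed simp

lemma length_letter_le_subst_iter:
  assumes "e \<in> set W"
  shows "length (subst_iter k j d [e]) \<le> length (subst_iter k j d W)"
proof -
  obtain A C where "W = A @ e # C"
    using assms by (meson split_list)
  then show ?thesis
    using subst_iter_Cons[of k j d e C] by simp
qed

lemma subst_iter_3_Cons: "\<exists>r. subst_iter k j d [3] = 3 # r"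
proof (induction d arbitrary: j)
  case (Suc d)
  then obtain r where "subst_iter k (Suc j) d [3] = 3 # r"
    by blast
  then show ?case
    by simp
qed simp

lemma subst_iter_3_prefix:
  assumes "d \<le> d'"
  shows "\<exists>r. subst_iter k j d' [3] = subst_iter k j d [3] @ r"
proof -
  obtain r where r: "subst_iter k (j + d) (d' - d) [3] = 3 # r"
    using subst_iter_3_Cons by blast
  have "subst_iter k j d' [3] = subst_iter k j d (subst_iter k (j + d) (d' - d) [3])"
    by (rule subst_iter_split) (use assms in auto)
  also have "\<dots> = subst_iter k j d [3] @ subst_iter k j d r"
    by (simp add: r subst_iter_Cons[of k j d 3 r])
  finally show ?thesis
    by blast
qed

lemma subst_iter_3_level_split:
  "subst_iter k 1 (d + D) [3] = subst_iter k 1 d (subst_iter k (Suc d) D [3])"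
  by (rule subst_iter_split) auto

declare subst_iter.simps(2) [simp del]

lemma rho_nth:
  assumes "n < length (subst_iter k 1 D [3])"
  shows "rho k n = subst_iter k 1 D [3] ! n"
  unfolding rho_def comp_word_eq_subst_iter
proof (rule the_equality)
  show "\<exists>i0. \<forall>i\<ge>i0. n < length (subst_iter k 1 i [3]) \<and>
      subst_iter k 1 i [3] ! n = subst_iter k 1 D [3] ! n"
    using assms subst_iter_3_prefix[of D _ k 1] by (metis nth_append length_append trans_less_add1)
next
  fix a
  assume "\<exists>i0. \<forall>i\<ge>i0. n < length (subst_iter k 1 i [3]) \<and> subst_iter k 1 i [3] ! n = a"
  then obtain i0 where "\<forall>i\<ge>i0. subst_iter k 1 i [3] ! n = a"
    by blast
  then have "subst_iter k 1 (max i0 D) [3] ! n = a"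
    by simp
  moreover obtain r where "subst_iter k 1 (max i0 D) [3] = subst_iter k 1 D [3] @ r"
    using subst_iter_3_prefix[of D "max i0 D"] by auto
  ultimately show "a = subst_iter k 1 D [3] ! n"
    using assms by (simp add: nth_append)
qed

section \<open>Linear recurrence of the subshift and of its generating word\<close>

text \<open>Positions start at 1 because the orbit generating \<^const>\<open>subshift\<close> starts
  at \<open>shift x\<close>.\<close>
definition linearly_recurrent_seq :: "nat \<Rightarrow> (nat \<Rightarrow> nat) \<Rightarrow> bool" where
  "linearly_recurrent_seq L x \<longleftrightarrow> (\<forall>i\<ge>1. \<forall>n>0. \<exists>j. i < j \<and> j \<le> i + L * n \<and>
     (\<forall>m<n. x (j + m) = x (i + m)))"

lemma shift_pow_apply: "(shift ^^ n) x m = x (n + m)"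
  by (induction n arbitrary: m) (auto simp: shift_def)

lemma closure_approx_prefix:
  fixes x :: "nat \<Rightarrow> nat"
  assumes "x \<in> closure T"
  shows "\<exists>y\<in>T. \<forall>m<N. y m = x m"
proof -
  define U where "U = (\<Inter>m\<in>{..<N}. (\<lambda>y. y m) -` {x m})"
  have "open ((\<lambda>y::nat \<Rightarrow> nat. y m) -` {x m})" for m
    by (intro open_vimage open_discrete continuous_on_product_coordinates)
  then have "open U"
    unfolding U_def by (intro open_INT finite_lessThan ballI)
  moreover have "x \<in> U"
    by (simp add: U_def)
  ultimately have "U \<inter> T \<noteq> {}"
    using assms open_Int_closure_eq_empty by blast
  then show ?thesis
    by (auto simp: U_def)
qed

lemma linearly_recurrent_seq_if_orbit_closure:
  assumes "linearly_recurrent (closure {(shift ^^ n) x | n. n \<ge> 1})" (is "linearly_recurrent ?X")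
  shows "\<exists>L. linearly_recurrent_seq L x"
proof -
  from assms obtain L where L: "\<forall>y\<in>?X. \<forall>i n. n > 0 \<longrightarrow>
      (\<exists>j. i < j \<and> j \<le> i + L * n \<and> (\<forall>m<n. y (j + m) = y (i + m)))"
    unfolding linearly_recurrent_def ..
  have "shift x \<in> ?X"
    by (intro closure_subset[THEN subsetD] CollectI exI[of _ "1::nat"] conjI) simp_all
  have return: "\<exists>j. Suc i < j \<and> j \<le> Suc i + L * n \<and> (\<forall>m<n. x (j + m) = x (Suc i + m))"
    if "0 < n" for i n
  proof -
    obtain j where "i < j" "j \<le> i + L * n" "\<forall>m<n. shift x (j + m) = shift x (i + m)"
      using L \<open>shift x \<in> ?X\<close> \<open>0 < n\<close> by blast
    then show ?thesis
      by (intro exI[of _ "Suc j"]) (simp add: shift_def)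
  qed
  have "linearly_recurrent_seq L x"
    unfolding linearly_recurrent_seq_def
  proof (intro allI impI)
    fix i n :: nat
    assume "1 \<le> i" "0 < n"
    then obtain i' where "i = Suc i'"
      by (cases i) auto
    with return[OF \<open>0 < n\<close>, of i'] show "\<exists>j. i < j \<and> j \<le> i + L * n \<and> (\<forall>m<n. x (j + m) = x (i + m))"
      by simp
  qed
  then show ?thesis ..
qed

lemma linearly_recurrent_orbit_closure_if_seq:
  assumes "linearly_recurrent_seq L x"
  shows "linearly_recurrent (closure {(shift ^^ n) x | n. n \<ge> 1})" (is "linearly_recurrent ?X")
proof -
  have "\<exists>j. i < j \<and> j \<le> i + L * n \<and> (\<forall>m<n. y (j + m) = y (i + m))"
    if "y \<in> ?X" "0 < n" for y i n
  proof -
    from that obtain p where p: "1 \<le> p" "\<forall>m<i + L * n + n. (shift ^^ p) x m = y m"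
      using closure_approx_prefix[of y _ "i + L * n + n"] by blast
    have "1 \<le> p + i"
      using p(1) by simp
    then obtain j where j: "p + i < j" "j \<le> p + i + L * n" "\<forall>m<n. x (j + m) = x (p + i + m)"
      using assms \<open>0 < n\<close> unfolding linearly_recurrent_seq_def by blast
    have "y (j - p + m) = y (i + m)" if "m < n" for m
    proof -
      have "y (j - p + m) = x (j + m)"
        using p(2)[rule_format, of "j - p + m"] j that by (simp add: shift_pow_apply)
      also have "\<dots> = y (i + m)"
        using p(2)[rule_format, of "i + m"] j that by (simp add: shift_pow_apply add.assoc)
      finally show ?thesis .
    qed
    with j show ?thesis
      by (intro exI[of _ "j - p"]) auto
  qed
  then show ?thesis
    unfolding linearly_recurrent_def by blast
qed

definition occurs_at :: "nat list \<Rightarrow> nat list \<Rightarrow> nat \<Rightarrow> bool" where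
  "occurs_at w V t \<longleftrightarrow> take (length w) (drop t V) = w"

lemma occurs_at_split: "occurs_at w V t \<Longrightarrow> V = take t V @ w @ drop (t + length w) V"
  unfolding occurs_at_def by (metis append_take_drop_id drop_drop add.commute)

lemma occurs_at_append: "occurs_at w (X @ w @ Y) (length X)"
  by (simp add: occurs_at_def)

lemma occurs_at_length:
  assumes "occurs_at w V t" "w \<noteq> []"
  shows "t + length w \<le> length V"
proof -
  have "min (length w) (length V - t) = length w"
    using arg_cong[OF assms(1)[unfolded occurs_at_def], of length] by simp
  with assms(2) show ?thesis
    by (cases w) (auto simp: min_def split: if_splits)
qed

lemma occurs_at_nth_iff:
  "t + length w \<le> length V \<Longrightarrow> occurs_at w V t \<longleftrightarrow> (\<forall>m<length w. V ! (t + m) = w ! m)"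
  unfolding occurs_at_def by (simp add: list_eq_iff_nth_eq)

lemma occurs_at_nth: "occurs_at w V t \<Longrightarrow> m < length w \<Longrightarrow> V ! (t + m) = w ! m"
  using occurs_at_length[of w V t] occurs_at_nth_iff[of t w V] by fastforce

lemma occurs_at_prefix: "occurs_at (u @ v) V t \<Longrightarrow> occurs_at u V t"
proof -
  assume "occurs_at (u @ v) V t"
  then have "take (length u) (take (length (u @ v)) (drop t V)) = u"
    by (simp add: occurs_at_def)
  then show ?thesis
    by (simp add: occurs_at_def min_def)
qed

lemma occurs_at_append_right: "occurs_at w V t \<Longrightarrow> occurs_at w (V @ r) t"
proof -
  assume occ: "occurs_at w V t"
  then have "length w \<le> length V - t"
    using arg_cong[of _ _ length, OF occ[unfolded occurs_at_def]] by (simp add: min_def split: if_splits)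
  with occ show ?thesis
    by (simp add: occurs_at_def)
qed

lemma take_occurs_at: "occurs_at w V t \<Longrightarrow> take (t + length w) V = take t V @ w"
  unfolding occurs_at_def by (simp add: take_add)

lemma occurrence_after_run:
  assumes run: "occurs_at (x # replicate K y) V t" and "x \<noteq> y"
    and "t < t'" "t' < length V" "V ! t' = x"
  shows "t + 1 + K \<le> t'"
proof (rule ccontr)
  assume "\<not> t + 1 + K \<le> t'"
  then have "V ! (t + (t' - t)) = (x # replicate K y) ! (t' - t)"
    using occurs_at_nth[OF run, of "t' - t"] by simp
  with assms(2-5) \<open>\<not> t + 1 + K \<le> t'\<close> show False
    by (simp add: nth_Cons')
qed

lemma occurs_at_subst_iter:
  assumes "occurs_at w V t"
  shows "occurs_at (subst_iter k j d w) (subst_iter k j d V) (length (subst_iter k j d (take t V)))"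
proof -
  have "subst_iter k j d V = subst_iter k j d (take t V) @ subst_iter k j d w @
      subst_iter k j d (drop (t + length w) V)"
    using arg_cong[OF occurs_at_split[OF assms], of "subst_iter k j d"] by simp
  then show ?thesis
    by (simp only: occurs_at_append)
qed

lemma occurs_at_subst_iter_3_mono:
  assumes "D \<le> D'" "occurs_at w (subst_iter k j D [3]) t"
  shows "occurs_at w (subst_iter k j D' [3]) t"
proof -
  obtain r where "subst_iter k j D' [3] = subst_iter k j D [3] @ r"
    using subst_iter_3_prefix[OF assms(1)] by blast
  with assms(2) show ?thesis
    by (simp add: occurs_at_append_right)
qed

lemma take_subst_iter_3_mono:
  assumes "D \<le> D'" "t \<le> length (subst_iter k j D [3])"
  shows "take t (subst_iter k j D' [3]) = take t (subst_iter k j D [3])"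
proof -
  obtain r where "subst_iter k j D' [3] = subst_iter k j D [3] @ r"
    using subst_iter_3_prefix[OF assms(1)] by blast
  with assms(2) show ?thesis
    by simp
qed

lemma occurs_in_rho_iff:
  assumes "i + length u \<le> length (subst_iter k 1 D [3])"
  shows "occurs_at u (subst_iter k 1 D [3]) i \<longleftrightarrow> (\<forall>m<length u. rho k (i + m) = u ! m)"
proof -
  have "rho k (i + m) = subst_iter k 1 D [3] ! (i + m)" if "m < length u" for m
    using assms that by (intro rho_nth) simp
  then show ?thesis
    unfolding occurs_at_nth_iff[OF assms] by auto
qed

lemma rho_occurrence_of_subst:
  assumes "occurs_at w (subst_iter k (Suc d) D [3]) t" "m < length (subst_iter k 1 d w)"
  shows "rho k (length (subst_iter k 1 d (take t (subst_iter k (Suc d) D [3]))) + m) =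
    subst_iter k 1 d w ! m"
proof -
  let ?p = "length (subst_iter k 1 d (take t (subst_iter k (Suc d) D [3])))"
  have occ: "occurs_at (subst_iter k 1 d w) (subst_iter k 1 (d + D) [3]) ?p"
    unfolding subst_iter_3_level_split by (rule occurs_at_subst_iter[OF assms(1)])
  have "subst_iter k 1 d w \<noteq> []"
    using assms(2) by auto
  then have "?p + length (subst_iter k 1 d w) \<le> length (subst_iter k 1 (d + D) [3])"
    using occurs_at_length[OF occ] by blast
  with assms(2) have "?p + m < length (subst_iter k 1 (d + D) [3])"
    by linarith
  then show ?thesis
    using rho_nth occurs_at_nth[OF occ assms(2)] by simp
qed

lemma rho_window_return:
  assumes "take n (drop j (subst_iter k 1 D [3])) = take n (drop i (subst_iter k 1 D [3]))"
    and "j + n \<le> length (subst_iter k 1 D [3])" "i + n \<le> length (subst_iter k 1 D [3])"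
    and "m < n"
  shows "rho k (j + m) = rho k (i + m)"
proof -
  have "subst_iter k 1 D [3] ! (j + m) = subst_iter k 1 D [3] ! (i + m)"
    using arg_cong[OF assms(1), of "\<lambda>xs. xs ! m"] assms(2-4) by simp
  with assms(2-4) show ?thesis
    using rho_nth[of "j + m" k D] rho_nth[of "i + m" k D] by simp
qed

section \<open>Lengths of the blocks\<close>

locale positive_coding =
  fixes k :: "nat \<Rightarrow> nat"
  assumes k_pos: "1 \<le> i \<Longrightarrow> 1 \<le> k i"
begin

definition len3 :: "nat \<Rightarrow> nat" where
  "len3 d = length (subst_iter k 1 d [3])"

definition len1 :: "nat \<Rightarrow> nat" where
  "len1 d = length (subst_iter k 1 d [1])"

lemma len1_pos: "0 < len1 d"
  and len3_pos: "0 < len3 d"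
  using length_subst_iter_letter_pos[of 1 k 1 d] length_subst_iter_letter_pos[of 3 k 1 d]
  unfolding len1_def len3_def by simp_all

lemma length_subst_iter_2: "length (subst_iter k 1 d [2]) = len1 (Suc d)"
  unfolding len1_def subst_iter_Suc_inner by simp

lemma len3_Suc: "len3 (Suc d) = len3 d + (k (Suc d) - 1) * len1 d"
  unfolding len3_def len1_def subst_iter_Suc_inner by (simp add: length_subst_iter_Cons_replicate)

lemma len1_Suc_Suc: "len1 (Suc (Suc d)) = len3 (Suc d) + len1 d"
proof -
  have "len1 (Suc (Suc d)) = len3 d + k (Suc d) * len1 d"
    unfolding len3_def len1_def subst_iter_Suc_inner by (simp add: length_subst_iter_Cons_replicate)
  moreover have "1 \<le> k (Suc d)"
    using k_pos by simp
  ultimately show ?thesis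
    using len3_Suc[of d] by (cases "k (Suc d)") auto
qed

lemma len3_mono: "d \<le> d' \<Longrightarrow> len3 d \<le> len3 d'"
  unfolding len3_def using subst_iter_3_prefix[of d d' k 1] by auto

lemma len3_le_len1_Suc: "len3 d \<le> len1 (Suc d)"
proof (cases d)
  case 0
  then show ?thesis
    by (simp add: len3_def len1_def subst_iter.simps)
next
  case (Suc d')
  then show ?thesis
    using len1_Suc_Suc[of d'] by simp
qed

lemma len1_le_len1_Suc: "len1 d \<le> len1 (Suc d)"
proof -
  have "len1 d \<le> len1 (Suc d) \<and> len1 (Suc d) \<le> len1 (Suc (Suc d))"
  proof (induction d)
    case 0
    have "len1 0 = 1" "len1 1 = 1"
      by (simp_all add: len1_def subst_iter.simps)
    then show ?case
      using len1_Suc_Suc[of 0] by simp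
  next
    case (Suc d)
    then show ?case
      using len1_Suc_Suc[of d] len1_Suc_Suc[of "Suc d"] len3_mono[of "Suc d" "Suc (Suc d)"] by simp
  qed
  then show ?thesis ..
qed

lemma len1_Suc_le_double_len3:
  assumes "1 \<le> a" "2 \<le> k a"
  shows "len1 (Suc a) \<le> 2 * len3 a"
proof -
  obtain a' where a: "a = Suc a'"
    using assms(1) by (cases a) auto
  have "1 \<le> k a - 1"
    using assms(2) by linarith
  then have "len1 a' \<le> (k a - 1) * len1 a'"
    using mult_le_mono1 by fastforce
  moreover have "len1 (Suc a) = len3 a + len1 a'" "len3 a = len3 a' + (k a - 1) * len1 a'"
    using len1_Suc_Suc[of a'] len3_Suc[of a'] a by simp_all
  ultimately show ?thesis
    by linarith
qed

lemma len1_linear_growth: "len1 (Suc j) + m * len3 j \<le> len1 (Suc j + 2 * m)"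
proof (induction m)
  case (Suc m)
  have "len3 j \<le> len3 (Suc (Suc j + 2 * m))"
    by (rule len3_mono) simp
  with Suc show ?case
    using len1_Suc_Suc[of "Suc j + 2 * m"] by simp
qed simp

lemma len3_less_at_letter_expansion:
  assumes "2 \<le> k (Suc d)"
  shows "len3 d < len3 (Suc d)"
  using len3_Suc[of d] len1_pos[of d] assms by simp

lemma length_before_final_2:
  assumes "subst_iter k (Suc j) (2 * m) [2] = R @ [2]"
  shows "m * len3 j \<le> length (subst_iter k 1 j R)"
proof -
  have "subst_iter k 1 (j + 2 * m) [2] = subst_iter k 1 j (subst_iter k (Suc j) (2 * m) [2])"
    by (rule subst_iter_split) auto
  then have "length (subst_iter k 1 j R) + len1 (Suc j) = len1 (Suc j + 2 * m)"
    using assms length_subst_iter_2[of j] length_subst_iter_2[of "j + 2 * m"] by simp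
  then show ?thesis
    using len1_linear_growth[of j m] by linarith
qed

lemma length_letter_le_len1_Suc: "x \<in> {1,3} \<Longrightarrow> length (subst_iter k 1 d [x]) \<le> len1 (Suc d)"
  using len1_le_len1_Suc[of d] len3_le_len1_Suc[of d] by (auto simp: len1_def len3_def)

lemma length_subst_iter_after_run:
  assumes "occurs_at (x # replicate K 2) V t" "t + 1 + K \<le> t'"
  shows "length (subst_iter k 1 d (take t V)) + length (subst_iter k 1 d [x]) + K * len1 (Suc d) \<le>
    length (subst_iter k 1 d (take t' V))"
proof -
  have "length (subst_iter k 1 d (take (t + 1 + K) V)) \<le> length (subst_iter k 1 d (take t' V))"
    using assms(2) by (rule length_subst_iter_take_mono)
  moreover have "take (t + 1 + K) V = take t V @ x # replicate K 2"
    using take_occurs_at[OF assms(1)] by simp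
  ultimately show ?thesis
    using length_subst_iter_Cons_replicate[of k 1 d x K 2] length_subst_iter_2[of d] by simp
qed

end

section \<open>Letters in the blocks\<close>

lemma three_in_subst_iter: "3 \<in> set W \<Longrightarrow> 3 \<in> set (subst_iter k j d W)"
proof (induction d arbitrary: j)
  case (Suc d)
  then have "3 \<in> set (subst_iter k (Suc j) d W)"
    by simp
  then show ?case
    by (auto simp: subst_iter.simps set_subst_word intro!: bexI[of _ 3])
qed simp

lemma three_in_subst_iter_letter:
  assumes "e \<in> {1,2,3}" "2 \<le> d"
  shows "3 \<in> set (subst_iter k j d [e])"
proof -
  have "subst_iter k j d [e] = subst_iter k j (d - 2) (subst_iter k (j + (d - 2)) 2 [e])"
    by (rule subst_iter_split) (use assms in auto)
  moreover have "3 \<in> set (subst_iter k (j + (d - 2)) 2 [e])"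
    using assms(1) by (auto simp: subst_iter_2)
  ultimately show ?thesis
    using three_in_subst_iter by metis
qed

lemma subst_iter_2_avoids_2:
  assumes "k (Suc a) = 1" "set W \<subseteq> {1,3}"
  shows "set (subst_iter k a 2 W) \<subseteq> {1,3}"
proof -
  have "set (subst_word (k (Suc a)) W) \<subseteq> {2,3}"
    using assms by (auto simp: set_subst_word chi.simps)
  then show ?thesis
    by (auto simp: subst_iter_2 set_subst_word)
qed

lemma odd_offset_ones_shift:
  assumes "\<forall>i<Suc m. k (a + 2 * i + 1) = 1"
  shows "\<forall>i<m. k (a + 2 + 2 * i + 1) = 1" and "k (Suc a) = 1"
proof -
  show "\<forall>i<m. k (a + 2 + 2 * i + 1) = 1"
  proof (intro allI impI)
    fix i
    assume "i < m"
    with assms[rule_format, of "Suc i"] show "k (a + 2 + 2 * i + 1) = 1"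
      by (simp add: algebra_simps)
  qed
  show "k (Suc a) = 1"
    using assms[rule_format, of 0] by simp
qed

lemma subst_iter_even_avoids_2:
  assumes "\<forall>i<m. k (a + 2 * i + 1) = 1" "set W \<subseteq> {1,3}"
  shows "set (subst_iter k a (2 * m) W) \<subseteq> {1,3}"
  using assms(1)
proof (induction m arbitrary: a)
  case (Suc m)
  have "subst_iter k a (2 * Suc m) W = subst_iter k a 2 (subst_iter k (a + 2) (2 * m) W)"
    by (rule subst_iter_split) auto
  with Suc.IH odd_offset_ones_shift[OF Suc.prems] show ?case
    using subst_iter_2_avoids_2 by simp
qed (use assms(2) in simp)

lemma subst_iter_even_ends_with_2:
  assumes "\<forall>i<m. k (a + 2 * i + 1) = 1"
  shows "\<exists>R. subst_iter k a (2 * m) [2] = R @ [2] \<and> set R \<subseteq> {1,3}"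
  using assms
proof (induction m arbitrary: a)
  case 0
  show ?case
    by (intro exI[of _ "[]"]) simp
next
  case (Suc m)
  note ones = odd_offset_ones_shift[OF Suc.prems]
  obtain R where R: "subst_iter k (a + 2) (2 * m) [2] = R @ [2]" "set R \<subseteq> {1,3}"
    using Suc.IH[OF ones(1)] by blast
  have "subst_iter k a (2 * Suc m) [2] = subst_iter k a 2 (subst_iter k (a + 2) (2 * m) [2])"
    by (rule subst_iter_split) auto
  also have "\<dots> = subst_iter k a 2 R @ (3 # replicate (k a - 1) 1) @ [2]"
    using ones(2) R(1) by (simp add: subst_iter_2)
  finally show ?case
    using subst_iter_2_avoids_2[of k a R] ones(2) R(2)
    by (intro exI[of _ "subst_iter k a 2 R @ 3 # replicate (k a - 1) 1"]) auto
qed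

definition expanding_in_windows :: "(nat \<Rightarrow> nat) \<Rightarrow> nat \<Rightarrow> bool" where
  "expanding_in_windows k H \<longleftrightarrow> (\<forall>x. (\<exists>a. even a \<and> x \<le> a \<and> a \<le> x + H \<and> 2 \<le> k a) \<and>
    (\<exists>a. odd a \<and> x \<le> a \<and> a \<le> x + H \<and> 2 \<le> k a))"

definition blocks_contain_all_letters :: "(nat \<Rightarrow> nat) \<Rightarrow> nat \<Rightarrow> bool" where
  "blocks_contain_all_letters k G \<longleftrightarrow>
    (\<forall>j\<ge>1. \<forall>e\<in>{1,2,3}. {1,2,3} \<subseteq> set (subst_iter k j G [e]))"

context positive_coding
begin

lemma letters_13_subst_iter_even:
  "{1,3} \<subseteq> set W \<Longrightarrow> 1 \<le> j \<Longrightarrow> {1,3} \<subseteq> set (subst_iter k j (2 * t) W)"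
proof (induction t arbitrary: j)
  case (Suc t)
  have "subst_iter k j (2 * Suc t) W = subst_iter k j 2 (subst_iter k (j + 2) (2 * t) W)"
    by (rule subst_iter_split) auto
  moreover have "{1,3} \<subseteq> set (subst_iter k (j + 2) (2 * t) W)"
    using Suc by simp
  moreover have "1 \<le> k j"
    using k_pos Suc.prems by simp
  ultimately show ?case
    by (force simp: subst_iter_2 set_subst_word)
qed simp

lemma letters_123_subst_iter:
  "{1,2,3} \<subseteq> set W \<Longrightarrow> 1 \<le> j \<Longrightarrow> {1,2,3} \<subseteq> set (subst_iter k j d W)"
proof (induction d arbitrary: j)
  case (Suc d)
  then have "{1,2,3} \<subseteq> set (subst_iter k (Suc j) d W)" "1 \<le> k j"
    using k_pos by simp_all
  then show ?case
    by (force simp: set_subst_word subst_iter.simps)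
qed simp

text \<open>A substitution with \<open>k \<ge> 2\<close> turns the letter 3 into a word containing 3 and 1;
  the pair \<open>{1,3}\<close> survives two further substitutions, and one more substitution with
  \<open>k \<ge> 2\<close> turns it into all three letters, which then survive every substitution.\<close>
lemma all_letters_subst_iter:
  assumes "1 \<le> j" "j \<le> a2" "a2 < a1" "odd (a1 - a2)" "2 \<le> k a1" "2 \<le> k a2"
    "a1 + 3 \<le> j + D" "e \<in> {1,2,3}"
  shows "{1,2,3} \<subseteq> set (subst_iter k j D [e])"
proof -
  obtain t where t: "a1 - a2 = Suc (2 * t)"
    using assms(4) by (metis oddE Suc_eq_plus1)
  define D1 where "D1 = D - (a1 - j) - 1"
  define Y where "Y = subst_iter k a1 (Suc D1) [e]"
  have "subst_iter k j D [e] = subst_iter k j (a1 - j) Y"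
    unfolding Y_def D1_def by (rule subst_iter_split) (use assms in auto)
  also have "\<dots> = subst_iter k j (a2 - j) (subst_iter k a2 (Suc (2 * t)) Y)"
    by (rule subst_iter_split) (use assms t in auto)
  finally have split: "subst_iter k j D [e] = subst_iter k j (a2 - j) (subst_iter k a2 (Suc (2 * t)) Y)" .
  have "3 \<in> set (subst_iter k (Suc a1) D1 [e])"
    using three_in_subst_iter_letter assms by (simp add: D1_def)
  then have "{1,3} \<subseteq> set Y"
    using assms(5) by (force simp: Y_def set_subst_word subst_iter.simps)
  then have "{1,3} \<subseteq> set (subst_iter k (Suc a2) (2 * t) Y)"
    using letters_13_subst_iter_even assms by simp
  then have "{1,2,3} \<subseteq> set (subst_iter k a2 (Suc (2 * t)) Y)"
    using assms(6) by (force simp: set_subst_word subst_iter.simps)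
  then show ?thesis
    unfolding split using letters_123_subst_iter assms by simp
qed

lemma all_letters_uniform:
  assumes "expanding_in_windows k H"
  shows "blocks_contain_all_letters k (2 * H + 4)"
  unfolding blocks_contain_all_letters_def
proof (intro allI impI ballI)
  fix j e :: nat
  assume "1 \<le> j" "e \<in> {1,2,3}"
  obtain a2 where a2: "even a2" "j \<le> a2" "a2 \<le> j + H" "2 \<le> k a2"
    using assms unfolding expanding_in_windows_def by blast
  obtain a1 where a1: "odd a1" "a2 + 1 \<le> a1" "a1 \<le> a2 + 1 + H" "2 \<le> k a1"
    using assms unfolding expanding_in_windows_def by blast
  have "odd (a1 - a2)"
    using a1 a2 by simp
  with a1 a2 \<open>1 \<le> j\<close> \<open>e \<in> {1,2,3}\<close> show "{1,2,3} \<subseteq> set (subst_iter k j (2 * H + 4) [e])"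
    using all_letters_subst_iter[of j a2 a1 "2 * H + 4" e] by simp
qed

end

section \<open>Recognizability\<close>

lemma chi_nth_pos: "0 < q \<Longrightarrow> q < length (chi c a) \<Longrightarrow> chi c a ! q = 1"
  by (auto simp: chi.simps nth_Cons' split: if_splits)

lemma subst_word_cut_point:
  assumes "q < length (subst_word c V)" "subst_word c V ! q \<noteq> 1"
  shows "\<exists>t. q = length (subst_word c (take t V))"
  using assms
proof (induction V arbitrary: q)
  case (Cons v V)
  show ?case
  proof (cases "q < length (chi c v)")
    case True
    with Cons.prems(2) chi_nth_pos[of q c v] have "q = 0"
      by (auto simp: nth_append)
    then show ?thesis
      by (intro exI[of _ 0]) simp
  next
    case False
    with Cons.prems have "q - length (chi c v) < length (subst_word c V)"
      "subst_word c V ! (q - length (chi c v)) \<noteq> 1"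
      by (auto simp: nth_append)
    then obtain t where "q - length (chi c v) = length (subst_word c (take t V))"
      using Cons.IH by blast
    with False show ?thesis
      by (intro exI[of _ "Suc t"]) simp
  qed
qed simp

lemma last_subst_word:
  assumes "1 \<le> c" "w \<noteq> []" "last w \<in> {1,2}"
  shows "last (subst_word c w) \<in> {1,2}"
proof -
  have "subst_word c w = subst_word c (butlast w) @ chi c (last w)"
    using arg_cong[OF append_butlast_last_id[OF assms(2)], of "subst_word c"] by simp
  with assms show ?thesis
    by auto
qed

text \<open>\<open>chi c 2\<close> and \<open>chi c 3\<close> differ in their length only, so the two are told apart
  by whether position \<open>c\<close> carries a 1 or the first letter of what follows.\<close>
lemma chi_append_eq_imp_eq:
  assumes "1 \<le> c" "u \<in> {1,2,3}" "v \<in> {1,2,3}"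
    and X: "(X \<noteq> [] \<and> hd X \<noteq> 1) \<or> (X = [] \<and> u \<noteq> 3)"
    and Y: "Y = [] \<or> hd Y \<noteq> 1"
    and eq: "chi c u @ X @ Z = chi c v @ Y"
  shows "u = v"
proof (rule ccontr)
  assume "u \<noteq> v"
  obtain c' where c': "c = Suc c'"
    using assms(1) by (cases c) auto
  have drop_chi_2: "drop c (chi c 2 @ W) = 1 # W" and drop_chi_3: "drop c (chi c 3 @ W) = W"
    for W :: "nat list"
    using c' by (simp_all add: replicate_app_Cons_same[symmetric])
  consider "u = 1 \<or> v = 1" | "u = 2" "v = 3" | "u = 3" "v = 2"
    using assms(2,3) \<open>u \<noteq> v\<close> by auto
  then show False
  proof cases
    case 1
    with eq assms(2,3) \<open>u \<noteq> v\<close> show ?thesis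
      by auto
  next
    case 2
    with arg_cong[OF eq, of "drop c"] have "1 # X @ Z = Y"
      by (simp only: drop_chi_2 drop_chi_3 append_assoc)
    with Y show ?thesis
      by auto
  next
    case 3
    with arg_cong[OF eq, of "drop c"] have "X @ Z = 1 # Y"
      by (simp only: drop_chi_2 drop_chi_3 append_assoc)
    with X 3 show ?thesis
      by (cases X) auto
  qed
qed

lemma subst_word_prefix_cancel:
  assumes "1 \<le> c" "set U \<subseteq> {1,2,3}" "set V \<subseteq> {1,2,3}" "U \<noteq> []" "last U \<in> {1,2}"
    "subst_word c U @ Z = subst_word c V"
  shows "\<exists>Z'. V = U @ Z'"
  using assms(2-)
proof (induction U arbitrary: V Z)
  case (Cons u U)
  obtain v V' where V: "V = v # V'"
    using Cons.prems subst_word_ne_Nil[of "u # U" c] by (cases V) auto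
  have eq: "chi c u @ subst_word c U @ Z = chi c v @ subst_word c V'"
    using Cons.prems(5) V by simp
  have "(subst_word c U \<noteq> [] \<and> hd (subst_word c U) \<noteq> 1) \<or> (subst_word c U = [] \<and> u \<noteq> 3)"
    using Cons.prems hd_subst_word[of U c] subst_word_ne_Nil[of U c] by (cases "U = []") auto
  moreover have "subst_word c V' = [] \<or> hd (subst_word c V') \<noteq> 1"
    using Cons.prems(2) V hd_subst_word[of V' c] by (cases "V' = []") auto
  ultimately have "u = v"
    using chi_append_eq_imp_eq[OF assms(1) _ _ _ _ eq] Cons.prems V by simp
  with eq have "subst_word c U @ Z = subst_word c V'"
    by simp
  with Cons.prems Cons.IH[of V' Z] V \<open>u = v\<close> show ?case
    by (cases "U = []") auto
qed simp

lemma subst_word_recognizable: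
  assumes "1 \<le> c" "set U \<subseteq> {1,2,3}" "set V \<subseteq> {1,2,3}" "U \<noteq> []" "last U \<in> {1,2}"
    and occ: "occurs_at (subst_word c U) (subst_word c V) q"
  shows "\<exists>t. q = length (subst_word c (take t V)) \<and> occurs_at U V t"
proof -
  have ne: "subst_word c U \<noteq> []" and hd: "hd (subst_word c U) \<in> {2,3}"
    using assms subst_word_ne_Nil hd_subst_word by auto
  have len: "q + length (subst_word c U) \<le> length (subst_word c V)"
    using occurs_at_length[OF occ ne] .
  then have "\<forall>m<length (subst_word c U). subst_word c V ! (q + m) = subst_word c U ! m"
    using occ by (simp add: occurs_at_nth_iff)
  from this[rule_format, of 0] ne have "subst_word c V ! q = hd (subst_word c U)"
    by (simp add: hd_conv_nth)
  with hd have "subst_word c V ! q \<noteq> 1"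
    by auto
  moreover from len ne have "q < length (subst_word c V)"
    by (cases "subst_word c U") auto
  ultimately obtain t where t: "q = length (subst_word c (take t V))"
    using subst_word_cut_point by blast
  have "subst_word c V = subst_word c (take t V) @ subst_word c (drop t V)"
    by (simp flip: subst_word_append)
  with t have "drop q (subst_word c V) = subst_word c (drop t V)"
    by simp
  with occ have "subst_word c U @ drop (length (subst_word c U)) (drop q (subst_word c V)) =
      subst_word c (drop t V)"
    using append_take_drop_id[of "length (subst_word c U)" "drop q (subst_word c V)"]
    unfolding occurs_at_def by simp
  moreover have "set (drop t V) \<subseteq> {1,2,3}"
    using assms(3) by (auto dest: in_set_dropD)
  ultimately obtain Z' where "drop t V = U @ Z'"
    using subst_word_prefix_cancel[OF assms(1,2) _ assms(4,5)] by blast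
  with t show ?thesis
    by (auto simp: occurs_at_def)
qed

context positive_coding
begin

lemma last_subst_iter:
  "1 \<le> j \<Longrightarrow> set w \<subseteq> {1,2,3} \<Longrightarrow> w \<noteq> [] \<Longrightarrow> last w \<in> {1,2} \<Longrightarrow>
    last (subst_iter k j d w) \<in> {1,2}"
proof (induction d arbitrary: j)
  case (Suc d)
  then show ?case
    using last_subst_word[OF k_pos] subst_iter_ne_Nil by (simp add: subst_iter.simps)
qed simp

lemma subst_iter_recognizable:
  assumes "1 \<le> j" "set w \<subseteq> {1,2,3}" "set V \<subseteq> {1,2,3}" "w \<noteq> []" "last w \<in> {1,2}"
    "occurs_at (subst_iter k j d w) (subst_iter k j d V) q"
  shows "\<exists>t. q = length (subst_iter k j d (take t V)) \<and> occurs_at w V t"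
  using assms
proof (induction d arbitrary: j q)
  case 0
  then show ?case
    using occurs_at_length[of w V q] by (intro exI[of _ q]) simp
next
  case (Suc d)
  let ?U = "subst_iter k (Suc j) d w" and ?V = "subst_iter k (Suc j) d V"
  have "set ?U \<subseteq> {1,2,3}" "?U \<noteq> []" "last ?U \<in> {1,2}" "set ?V \<subseteq> {1,2,3}"
    using Suc.prems set_subst_iter_subset subst_iter_ne_Nil last_subst_iter by auto
  moreover have "occurs_at (subst_word (k j) ?U) (subst_word (k j) ?V) q"
    using Suc.prems(6) by (simp add: subst_iter.simps)
  ultimately obtain t1 where t1: "q = length (subst_word (k j) (take t1 ?V))" "occurs_at ?U ?V t1"
    using subst_word_recognizable[OF k_pos[OF \<open>1 \<le> j\<close>]] by blast
  then obtain t where t: "t1 = length (subst_iter k (Suc j) d (take t V))" "occurs_at w V t"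
    using Suc.IH[of "Suc j" t1] Suc.prems by auto
  have "?V = subst_iter k (Suc j) d (take t V) @ subst_iter k (Suc j) d (drop t V)"
    by (simp flip: subst_iter_append)
  with t(1) have "take t1 ?V = subst_iter k (Suc j) d (take t V)"
    by simp
  with t1 t show ?case
    by (auto simp: subst_iter.simps)
qed

lemma rho_occurrence_recognizable:
  assumes "w \<noteq> []" "set w \<subseteq> {1,2,3}" "last w \<in> {1,2}"
    and "j + length (subst_iter k 1 d w) \<le> len3 (d + D)"
    and "\<forall>m<length (subst_iter k 1 d w). rho k (j + m) = subst_iter k 1 d w ! m"
  shows "\<exists>t. j = length (subst_iter k 1 d (take t (subst_iter k (Suc d) D [3]))) \<and>
    occurs_at w (subst_iter k (Suc d) D [3]) t"
proof -
  have "occurs_at (subst_iter k 1 d w) (subst_iter k 1 (d + D) [3]) j"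
    using occurs_in_rho_iff assms(4,5) by (simp add: len3_def)
  then have "occurs_at (subst_iter k 1 d w) (subst_iter k 1 d (subst_iter k (Suc d) D [3])) j"
    by (simp only: subst_iter_3_level_split)
  moreover have "set (subst_iter k (Suc d) D [3]) \<subseteq> {1,2,3}"
    by (rule set_subst_iter_subset) simp
  ultimately show ?thesis
    using subst_iter_recognizable[of 1 w _ d j] assms(1-3) by simp
qed

end

lemma take_concat_ends_in_block:
  assumes "\<forall>c\<in>set U. y \<in> set (f c) \<longrightarrow> (\<exists>R. f c = R @ [y] \<and> y \<notin> set R \<and> Q R)"
    and "t < length (concat (map f U))" "concat (map f U) ! t = y"
  shows "\<exists>Y R. take t (concat (map f U)) = Y @ R \<and> y \<notin> set R \<and> Q R"
  using assms
proof (induction U arbitrary: t)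
  case (Cons u U)
  show ?case
  proof (cases "t < length (f u)")
    case True
    with Cons.prems(3) have "f u ! t = y"
      by (simp add: nth_append)
    with True Cons.prems(1) obtain R where R: "f u = R @ [y]" "y \<notin> set R" "Q R"
      by (meson list.set_intros(1) nth_mem)
    with True \<open>f u ! t = y\<close> have "t = length R"
      by (auto simp: nth_append split: if_splits)
    with R show ?thesis
      by (intro exI[of _ "[]"] exI[of _ R]) simp
  next
    case False
    with Cons.prems(2,3) have "t - length (f u) < length (concat (map f U))"
      "concat (map f U) ! (t - length (f u)) = y"
      by (auto simp: nth_append)
    moreover have "\<forall>c\<in>set U. y \<in> set (f c) \<longrightarrow> (\<exists>R. f c = R @ [y] \<and> y \<notin> set R \<and> Q R)"
      using Cons.prems(1) by simp
    ultimately obtain Y R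
      where "take (t - length (f u)) (concat (map f U)) = Y @ R" "y \<notin> set R" "Q R"
      using Cons.IH by blast
    with False show ?thesis
      by (intro exI[of _ "f u @ Y"] exI[of _ R]) simp
  qed
qed simp

lemma take_concat_gap:
  assumes blocks: "\<forall>c\<in>set U. y \<in> set (f c) \<longrightarrow> (\<exists>R. f c = R @ [y] \<and> y \<notin> set R \<and> Q R)"
    and "t < t'" "t' < length (concat (map f U))"
    and "concat (map f U) ! t = y" "concat (map f U) ! t' = y"
  shows "\<exists>Y R. take t' (concat (map f U)) = take t (concat (map f U)) @ Y @ R \<and> Y \<noteq> [] \<and> Q R"
proof -
  let ?V = "concat (map f U)"
  obtain Y R where YR: "take t' ?V = Y @ R" "y \<notin> set R" "Q R"
    using take_concat_ends_in_block[OF blocks assms(3,5)] by blast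
  have "t < length Y"
  proof (rule ccontr)
    assume "\<not> t < length Y"
    moreover have "(Y @ R) ! t = y"
      using YR(1) assms(2,4) by (metis nth_take)
    moreover have "length Y + length R = t'"
      using arg_cong[OF YR(1), of length] assms(3) by simp
    ultimately have "y \<in> set R"
      using assms(2) by (auto simp: nth_append)
    with YR(2) show False ..
  qed
  then have "take t ?V = take t Y"
    using YR(1) assms(2) by (metis less_imp_le_nat min.absorb1 take_append take_take
      append_Nil2 take_eq_Nil diff_is_0_eq)
  with YR \<open>t < length Y\<close> show ?thesis
    by (intro exI[of _ "drop t Y"] exI[of _ R]) simp
qed

lemma subst_iter_block_index:
  "pos < length (subst_iter k j d U) \<Longrightarrow> \<exists>r<length U.
    length (subst_iter k j d (take r U)) \<le> pos \<and> pos < length (subst_iter k j d (take (Suc r) U))"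
proof (induction U arbitrary: pos)
  case (Cons u U)
  show ?case
  proof (cases "pos < length (subst_iter k j d [u])")
    case True
    then show ?thesis
      by (intro exI[of _ 0]) simp
  next
    case False
    with Cons.prems have "pos - length (subst_iter k j d [u]) < length (subst_iter k j d U)"
      using subst_iter_Cons[of k j d u U] by simp
    then obtain r where "r < length U"
      "length (subst_iter k j d (take r U)) \<le> pos - length (subst_iter k j d [u])"
      "pos - length (subst_iter k j d [u]) < length (subst_iter k j d (take (Suc r) U))"
      using Cons.IH by blast
    with False show ?thesis
      using subst_iter_Cons[of k j d u "take r U"] subst_iter_Cons[of k j d u "take (Suc r) U"]
      by (intro exI[of _ "Suc r"]) (simp, linarith)
  qed
qed simp

lemma subst_iter_block_index_not_last:
  assumes "\<forall>c\<in>set U. length (subst_iter k j d [c]) \<le> b" "pos + s * b < length (subst_iter k j d U)"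
  shows "\<exists>r. r + s < length U \<and> length (subst_iter k j d (take r U)) \<le> pos \<and>
    pos < length (subst_iter k j d (take (Suc r) U))"
proof -
  obtain r where r: "r < length U" "length (subst_iter k j d (take r U)) \<le> pos"
    "pos < length (subst_iter k j d (take (Suc r) U))"
    using subst_iter_block_index[of pos k j d U] assms(2) by auto
  have "length (subst_iter k j d [U ! r]) \<le> b"
    using assms(1) r(1) by simp
  then have "length (subst_iter k j d (take (Suc r) U)) \<le> pos + b"
    using r length_subst_iter_take_Suc[OF r(1), of k j d] by linarith
  moreover have "length (subst_iter k j d (drop (Suc r) U)) \<le> b * length (drop (Suc r) U)"
    using assms(1) by (intro length_subst_iter_le_mult) (auto dest: in_set_dropD)
  moreover have "length (subst_iter k j d U) =
      length (subst_iter k j d (take (Suc r) U)) + length (subst_iter k j d (drop (Suc r) U))"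
    using subst_iter_append[of k j d "take (Suc r) U" "drop (Suc r) U"] by simp
  ultimately have "s * b < b + b * (length U - Suc r)"
    using assms(2) by simp
  then have "s * b < Suc (length U - Suc r) * b"
    by (simp add: algebra_simps)
  then have "s < Suc (length U - Suc r)"
    by (rule mult_less_cancel2[THEN iffD1, THEN conjunct2])
  with r show ?thesis
    by (intro exI[of _ r]) auto
qed

lemma drop_subst_iter_at_block:
  assumes "Suc q < length V" "set V \<subseteq> {1,2,3}"
  shows "\<exists>Y. drop (length (subst_iter k j (d + 2) (take q V))) (subst_iter k j (d + 2) V) =
    subst_iter k j (d + 2) [V ! q] @ subst_iter k j d [3] @ Y"
proof -
  have "V ! Suc q \<in> {1,2,3}"
    using assms by (auto dest: nth_mem)
  then obtain z where z: "subst_iter k (j + d) 2 [V ! Suc q] = 3 # z"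
    by (auto simp: subst_iter_2)
  have "subst_iter k j (d + 2) [V ! Suc q] = subst_iter k j d (subst_iter k (j + d) 2 [V ! Suc q])"
    by (rule subst_iter_add)
  then have first: "subst_iter k j (d + 2) [V ! Suc q] = subst_iter k j d [3] @ subst_iter k j d z"
    unfolding z by (simp add: subst_iter_Cons[of k j d 3 z])
  have "drop q V = V ! q # V ! Suc q # drop (Suc (Suc q)) V"
    using assms(1) by (simp add: Cons_nth_drop_Suc)
  then have "drop (length (subst_iter k j (d + 2) (take q V))) (subst_iter k j (d + 2) V) =
      subst_iter k j (d + 2) [V ! q] @ subst_iter k j (d + 2) [V ! Suc q] @
        subst_iter k j (d + 2) (drop (Suc (Suc q)) V)"
    using subst_iter_Cons[of k j "d + 2" "V ! q" "V ! Suc q # drop (Suc (Suc q)) V"]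
      subst_iter_Cons[of k j "d + 2" "V ! Suc q" "drop (Suc (Suc q)) V"]
    by (simp add: drop_length_subst_iter_take)
  then show ?thesis
    unfolding first by auto
qed

text \<open>Positions at the same offset in two blocks of the same letter that are not the last
  ones see the same window of length \<open>n\<close>: it fits into the block followed by the prefix
  \<open>subst_iter k j m [3]\<close> that every next block starts with.\<close>
lemma window_determined_by_block_letter:
  assumes "n \<le> length (subst_iter k j m [3])" "set V \<subseteq> {1,2,3}"
    and "Suc r < length V" "Suc p < length V" "V ! p = V ! r"
    and "length (subst_iter k j (m + 2) (take r V)) \<le> i"
      "i < length (subst_iter k j (m + 2) (take (Suc r) V))"
  shows "take n (drop (length (subst_iter k j (m + 2) (take p V)) +
      (i - length (subst_iter k j (m + 2) (take r V)))) (subst_iter k j (m + 2) V)) =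
    take n (drop i (subst_iter k j (m + 2) V))"
proof -
  let ?\<sigma> = "subst_iter k j (m + 2)"
  define off where "off = i - length (?\<sigma> (take r V))"
  define X where "X = ?\<sigma> [V ! r] @ subst_iter k j m [3]"
  have "off + n \<le> length X"
    using assms(1,6,7) length_subst_iter_take_Suc[of r V k j "m + 2"] assms(3)
    by (simp add: off_def X_def)
  have window: "take n (drop (length (?\<sigma> (take q V)) + off) (?\<sigma> V)) = take n (drop off X)"
    if q: "Suc q < length V" "V ! q = V ! r" for q
  proof -
    obtain Y where "drop (length (?\<sigma> (take q V))) (?\<sigma> V) = X @ Y"
      using drop_subst_iter_at_block[OF q(1) assms(2), of k j m] q(2) by (auto simp: X_def)
    then have "drop (length (?\<sigma> (take q V)) + off) (?\<sigma> V) = drop off (X @ Y)"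
      by (simp add: add.commute flip: drop_drop)
    with \<open>off + n \<le> length X\<close> show ?thesis
      by simp
  qed
  have "i = length (?\<sigma> (take r V)) + off"
    using assms(6) by (simp add: off_def)
  with window[OF assms(3) refl] have "take n (drop i (?\<sigma> V)) = take n (drop off X)"
    by simp
  with window[OF assms(4,5)] show ?thesis
    unfolding off_def[symmetric] by simp
qed

lemma block_letter_recurs_in_next_block:
  assumes letters: "\<forall>e\<in>{1,2,3}. {1,2,3} \<subseteq> set (subst_iter k j G [e])"
    and "Suc (Suc q) < length V" "set V \<subseteq> {1,2,3}" "c \<in> {1,2,3}"
  shows "\<exists>r. Suc r < length (subst_iter k j G V) \<and> subst_iter k j G V ! r = c \<and>
    length (subst_iter k j G (take (Suc q) V)) \<le> r \<and>
    Suc r \<le> length (subst_iter k j G (take (Suc (Suc q)) V))"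
proof -
  let ?\<tau> = "subst_iter k j G"
  define Z where "Z = ?\<tau> [V ! Suc q]"
  have "Suc q < length V"
    using assms(2) by simp
  then have "V ! Suc q \<in> set V"
    by (rule nth_mem)
  with assms(3) have "V ! Suc q \<in> {1,2,3}"
    by blast
  with letters assms(4) have "c \<in> set Z"
    by (auto simp: Z_def)
  then obtain h where h: "h < length Z" "Z ! h = c"
    by (auto simp: in_set_conv_nth)
  have "drop (Suc (Suc q)) V \<noteq> []" "set (drop (Suc (Suc q)) V) \<subseteq> {1,2,3}"
    using assms(2,3) by (auto dest: in_set_dropD)
  then have tail: "0 < length (?\<tau> (drop (Suc (Suc q)) V))"
    using subst_iter_ne_Nil by blast
  have take2: "take (Suc (Suc q)) V = take (Suc q) V @ [V ! Suc q]"
    using assms(2) by (simp add: take_Suc_conv_app_nth)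
  then have "V = take (Suc q) V @ [V ! Suc q] @ drop (Suc (Suc q)) V"
    by (metis append.assoc append_take_drop_id)
  then have split: "?\<tau> V = ?\<tau> (take (Suc q) V) @ Z @ ?\<tau> (drop (Suc (Suc q)) V)"
    unfolding Z_def by (metis subst_iter_append)
  define r where "r = length (?\<tau> (take (Suc q) V)) + h"
  have "length (?\<tau> V) = length (?\<tau> (take (Suc q) V)) + length Z + length (?\<tau> (drop (Suc (Suc q)) V))"
    using split by simp
  with h(1) tail have "Suc r < length (?\<tau> V)"
    unfolding r_def by linarith
  moreover have "?\<tau> V ! r = c"
    using split h by (simp add: r_def nth_append)
  moreover have "Suc r \<le> length (?\<tau> (take (Suc (Suc q)) V))"
    using take2 h(1) by (simp add: r_def Z_def)
  ultimately show ?thesis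
    unfolding r_def by auto
qed

lemma window_returns_within_next_block:
  assumes letters: "\<forall>e\<in>{1,2,3}. {1,2,3} \<subseteq> set (subst_iter k (m + 3) G [e])"
    and "n \<le> length (subst_iter k 1 m [3])" "set V \<subseteq> {1,2,3}" "Suc (Suc q) < length V"
    and "i < length (subst_iter k 1 (m + 2 + G) (take (Suc q) V))"
    and r: "Suc r < length (subst_iter k (m + 3) G V)"
      "length (subst_iter k 1 (m + 2) (take r (subst_iter k (m + 3) G V))) \<le> i"
      "i < length (subst_iter k 1 (m + 2) (take (Suc r) (subst_iter k (m + 3) G V)))"
  shows "\<exists>j. i < j \<and> j < length (subst_iter k 1 (m + 2 + G) (take (Suc (Suc q)) V)) \<and>
    take n (drop j (subst_iter k 1 (m + 2 + G) V)) = take n (drop i (subst_iter k 1 (m + 2 + G) V))"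
proof -
  let ?U = "subst_iter k (m + 3) G" and ?\<tau> = "subst_iter k 1 (m + 2)"
  have level: "?\<tau> (?U W) = subst_iter k 1 (m + 2 + G) W" for W
    by (rule subst_iter_split[symmetric]) auto
  have block_start: "?\<tau> (take (length (?U (take p V))) (?U V)) = subst_iter k 1 (m + 2 + G) (take p V)"
    for p
    by (simp only: take_length_subst_iter_take level)
  have "set (?U V) \<subseteq> {1,2,3}"
    using assms(3) by (rule set_subst_iter_subset)
  moreover have "?U V ! r \<in> set (?U V)"
    using r(1) by (intro nth_mem) simp
  ultimately have "?U V ! r \<in> {1,2,3}"
    by blast
  then obtain r' where r': "Suc r' < length (?U V)" "?U V ! r' = ?U V ! r"
    "length (?U (take (Suc q) V)) \<le> r'" "Suc r' \<le> length (?U (take (Suc (Suc q)) V))"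
    using block_letter_recurs_in_next_block[OF letters assms(4,3)] by blast
  define j where "j = length (?\<tau> (take r' (?U V))) + (i - length (?\<tau> (take r (?U V))))"
  have "take n (drop j (?\<tau> (?U V))) = take n (drop i (?\<tau> (?U V)))"
    unfolding j_def using window_determined_by_block_letter[OF assms(2) \<open>set (?U V) \<subseteq> {1,2,3}\<close>
      r(1) r'(1,2) r(2,3)] .
  moreover have "i < j"
    using assms(5) length_subst_iter_take_mono[OF r'(3), of k 1 "m + 2" "?U V"]
    unfolding block_start j_def by linarith
  moreover have "j < length (?\<tau> (take (Suc r') (?U V)))"
  proof -
    have "r < length (?U V)" "r' < length (?U V)"
      using r(1) r'(1) by simp_all
    with r(2,3) r'(2) show ?thesis
      using length_subst_iter_take_Suc[of r "?U V" k 1 "m + 2"]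
        length_subst_iter_take_Suc[of r' "?U V" k 1 "m + 2"] unfolding j_def by simp
  qed
  moreover have "length (?\<tau> (take (Suc r') (?U V))) \<le>
      length (subst_iter k 1 (m + 2 + G) (take (Suc (Suc q)) V))"
    using length_subst_iter_take_mono[OF r'(4), of k 1 "m + 2" "?U V"] unfolding block_start .
  ultimately show ?thesis
    unfolding level by (intro exI[of _ j]) auto
qed

section \<open>Linear recurrence bounds the coding sequence\<close>

lemma lonely_element_without_bounded_gaps:
  fixes E :: "nat set"
  assumes "E \<noteq> {}" "\<not> bounded_gaps E"
  shows "\<exists>i0\<in>E. \<forall>i. i0 < i \<and> i \<le> i0 + M \<longrightarrow> i \<notin> E"
proof -
  obtain e0 where e0: "e0 \<in> E"
    using assms(1) by blast
  obtain n where n: "\<forall>i\<in>E. \<not> (n < i \<and> i \<le> n + (M + e0))"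
    using assms(2) unfolding bounded_gaps_def by blast
  have "e0 \<le> n"
    using n e0 by force
  define i0 where "i0 = Max {i\<in>E. i \<le> n}"
  have fin: "finite {i\<in>E. i \<le> n}"
    by simp
  have i0: "i0 \<in> E" "i0 \<le> n"
    using Max_in[OF fin] e0 \<open>e0 \<le> n\<close> unfolding i0_def by blast+
  have "i \<notin> E" if "i0 < i" "i \<le> i0 + M" for i
  proof
    assume "i \<in> E"
    show False
    proof (cases "i \<le> n")
      case True
      with \<open>i \<in> E\<close> have "i \<le> i0"
        unfolding i0_def using Max_ge[OF fin] by blast
      with that show False
        by simp
    next
      case False
      with n \<open>i \<in> E\<close> that i0 show False
        by force
    qed
  qed
  with i0 show ?thesis
    by blast
qed

locale infinite_type =
  fixes k :: "nat \<Rightarrow> nat"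
  assumes infinite_type: "infinite_type_coding k"

sublocale infinite_type \<subseteq> positive_coding
  using infinite_type by unfold_locales (simp add: infinite_type_coding_def)

context infinite_type
begin

lemma expanding_indices_unbounded:
  shows "\<exists>a. D < a \<and> even a \<and> 2 \<le> k a" and "\<exists>a. D < a \<and> odd a \<and> 2 \<le> k a"
proof -
  obtain i where "D < i" "1 < k (2 * i)"
    using infinite_type unfolding infinite_type_coding_def infinite_nat_iff_unbounded by blast
  then show "\<exists>a. D < a \<and> even a \<and> 2 \<le> k a"
    by (intro exI[of _ "2 * i"]) auto
  obtain i where "D < i" "1 \<le> i" "1 < k (2 * i - 1)"
    using infinite_type unfolding infinite_type_coding_def infinite_nat_iff_unbounded by blast
  moreover from this have "odd (2 * i - 1)"
    by presburger
  ultimately show "\<exists>a. D < a \<and> odd a \<and> 2 \<le> k a"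
    by (intro exI[of _ "2 * i - 1"]) auto
qed

lemma all_letters_eventually:
  assumes "1 \<le> j"
  shows "\<exists>D0. \<forall>D\<ge>D0. {1,2,3} \<subseteq> set (subst_iter k j D [3])"
proof -
  obtain a2 where a2: "j < a2" "odd a2" "2 \<le> k a2"
    using expanding_indices_unbounded(2) by blast
  obtain a1 where a1: "a2 < a1" "even a1" "2 \<le> k a1"
    using expanding_indices_unbounded(1) by blast
  have "odd (a1 - a2)"
    using a1 a2 by simp
  then show ?thesis
    using all_letters_subst_iter[OF assms, of a2 a1] a1 a2 by (intro exI[of _ "a1 + 3"]) auto
qed

lemma letter_occurs_eventually:
  assumes "1 \<le> j" "y \<in> {1,2}"
  shows "\<exists>D\<ge>D0. \<exists>t\<ge>1. occurs_at [y] (subst_iter k j D [3]) t"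
proof -
  obtain D1 where "\<forall>D\<ge>D1. {1,2,3} \<subseteq> set (subst_iter k j D [3])"
    using all_letters_eventually[OF assms(1)] by blast
  with assms(2) have "y \<in> set (subst_iter k j (D1 + D0) [3])"
    by auto
  then obtain t where t: "t < length (subst_iter k j (D1 + D0) [3])"
    "subst_iter k j (D1 + D0) [3] ! t = y"
    by (auto simp: in_set_conv_nth)
  moreover have "subst_iter k j (D1 + D0) [3] ! 0 = 3"
    using subst_iter_3_Cons[of k j "D1 + D0"] by auto
  ultimately have "1 \<le> t"
    using assms(2) by (cases t) auto
  moreover have "occurs_at [y] (subst_iter k j (D1 + D0) [3]) t"
    using t by (simp add: occurs_at_nth_iff)
  ultimately show ?thesis
    by (intro exI[of _ "D1 + D0"]) auto
qed

lemma len3_unbounded: "\<exists>D. n < len3 D"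
proof (induction n)
  case 0
  show ?case
    using len3_pos by blast
next
  case (Suc n)
  then obtain D where "n < len3 D"
    by blast
  obtain a where a: "D < a" "2 \<le> k a"
    using expanding_indices_unbounded(2) by blast
  then obtain a' where "a = Suc a'"
    by (cases a) auto
  with a have "len3 D \<le> len3 a'" "len3 a' < len3 a"
    using len3_mono len3_less_at_letter_expansion by simp_all
  with \<open>n < len3 D\<close> show ?case
    by (intro exI[of _ a]) simp
qed

lemma len3_eventually_gt: "\<exists>D\<ge>D0. N < len3 (d + D)"
proof -
  obtain D where "N < len3 D"
    using len3_unbounded by blast
  moreover have "len3 D \<le> len3 (d + (D + D0))"
    by (rule len3_mono) simp
  ultimately show ?thesis
    by (intro exI[of _ "D + D0"]) simp
qed

text \<open>By recognizability, the return of \<open>\<rho>\<close> to the image of an occurrence of \<open>w\<close> at level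
  \<open>d + 1\<close> is the image of a later occurrence of \<open>w\<close>.\<close>
lemma linearly_recurrent_desubstituted_return:
  assumes LR: "linearly_recurrent_seq L (rho k)"
    and w: "w \<noteq> []" "set w \<subseteq> {1,2,3}" "last w \<in> {1,2}"
    and t: "1 \<le> t" "occurs_at w (subst_iter k (Suc d) D0 [3]) t"
  shows "\<exists>D\<ge>D0. \<exists>t'>t. occurs_at w (subst_iter k (Suc d) D [3]) t' \<and>
    length (subst_iter k 1 d (take t' (subst_iter k (Suc d) D [3]))) \<le>
      length (subst_iter k 1 d (take t (subst_iter k (Suc d) D [3]))) +
      L * length (subst_iter k 1 d w)"
proof -
  define V0 where "V0 = subst_iter k (Suc d) D0 [3]"
  define p where "p = length (subst_iter k 1 d (take t V0))"
  define n where "n = length (subst_iter k 1 d w)"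
  have "t + length w \<le> length V0"
    using occurs_at_length t(2) w(1) unfolding V0_def by blast
  moreover have "set V0 \<subseteq> {1,2,3}"
    unfolding V0_def by (rule set_subst_iter_subset) simp
  ultimately have "1 \<le> p" "1 \<le> n"
    using length_subst_iter_take_pos[of V0 t k 1 d] subst_iter_ne_Nil[OF w(2,1), of k 1 d] t(1)
    by (auto simp: p_def n_def Suc_le_eq)
  then obtain j where j: "p < j" "j \<le> p + L * n" "\<forall>m<n. rho k (j + m) = rho k (p + m)"
    using LR[unfolded linearly_recurrent_seq_def, rule_format, of p n] by auto
  obtain D where D: "D0 \<le> D" "j + n < len3 (d + D)"
    using len3_eventually_gt by blast
  define V where "V = subst_iter k (Suc d) D [3]"
  have "\<forall>m<n. rho k (j + m) = subst_iter k 1 d w ! m"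
    using j(3) rho_occurrence_of_subst[OF t(2)] by (simp add: p_def n_def V0_def)
  then obtain t' where t': "j = length (subst_iter k 1 d (take t' V))" "occurs_at w V t'"
    using rho_occurrence_recognizable[OF w, of j d D] D(2) by (auto simp: V_def n_def)
  have "take t V = take t V0"
    using take_subst_iter_3_mono[OF D(1)] \<open>t + length w \<le> length V0\<close> by (simp add: V_def V0_def)
  have "\<not> t' \<le> t"
  proof
    assume "t' \<le> t"
    from length_subst_iter_take_mono[OF this, of k 1 d V] t'(1) j(1) \<open>take t V = take t V0\<close>
    show False
      by (simp add: p_def)
  qed
  moreover have "length (subst_iter k 1 d (take t' V)) \<le> length (subst_iter k 1 d (take t V)) + L * n"
    using t'(1) j(2) \<open>take t V = take t V0\<close> by (simp add: p_def)
  ultimately show ?thesis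
    using D(1) t'(2) unfolding V_def n_def by (blast intro: le_neq_implies_less not_le_imp_less)
qed

text \<open>The hypothesis makes consecutive occurrences of the image of \<open>y\<close> in \<open>\<rho>\<close> lie more than
  \<open>L\<close> times its length apart.\<close>
lemma sparse_letter_not_linearly_recurrent:
  assumes LR: "linearly_recurrent_seq L (rho k)" and y: "y \<in> {1,2}"
    and blocks: "\<forall>c\<in>{1,2,3}. y \<in> set (subst_iter k (Suc d) e [c]) \<longrightarrow>
      (\<exists>R. subst_iter k (Suc d) e [c] = R @ [y] \<and> y \<notin> set R \<and>
         L * length (subst_iter k 1 d [y]) \<le> length (subst_iter k 1 d R))"
  shows False
proof -
  obtain D1 t where D1: "e \<le> D1" and t: "1 \<le> t" "occurs_at [y] (subst_iter k (Suc d) D1 [3]) t"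
    using letter_occurs_eventually[of "Suc d" y e] y by auto
  then obtain D t' where D: "D1 \<le> D" and tt': "t < t'"
    and occ: "occurs_at [y] (subst_iter k (Suc d) D [3]) t'"
    and close: "length (subst_iter k 1 d (take t' (subst_iter k (Suc d) D [3]))) \<le>
      length (subst_iter k 1 d (take t (subst_iter k (Suc d) D [3]))) +
      L * length (subst_iter k 1 d [y])"
    using linearly_recurrent_desubstituted_return[OF LR, of "[y]" t d D1] y by auto
  define U where "U = subst_iter k (Suc d + e) (D - e) [3]"
  define V where "V = subst_iter k (Suc d) D [3]"
  have V: "V = concat (map (\<lambda>c. subst_iter k (Suc d) e [c]) U)"
    unfolding V_def U_def by (rule subst_iter_blocks) (use D D1 in simp)
  have "V ! t = y" "t' < length V" "V ! t' = y"
    using occurs_at_subst_iter_3_mono[OF D t(2)] occurs_at_length[OF occ] occurs_at_nth[OF occ, of 0]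
      occurs_at_nth[of "[y]" V t 0] by (simp_all add: V_def)
  moreover have "set U \<subseteq> {1,2,3}"
    unfolding U_def by (rule set_subst_iter_subset) simp
  with blocks have "\<forall>c\<in>set U. y \<in> set (subst_iter k (Suc d) e [c]) \<longrightarrow>
      (\<exists>R. subst_iter k (Suc d) e [c] = R @ [y] \<and> y \<notin> set R \<and>
         L * length (subst_iter k 1 d [y]) \<le> length (subst_iter k 1 d R))"
    by blast
  ultimately obtain Y R where YR: "take t' V = take t V @ Y @ R" "Y \<noteq> []"
    "L * length (subst_iter k 1 d [y]) \<le> length (subst_iter k 1 d R)"
    using take_concat_gap[where U = U and f = "\<lambda>c. subst_iter k (Suc d) e [c]"
        and Q = "\<lambda>R. L * length (subst_iter k 1 d [y]) \<le> length (subst_iter k 1 d R)",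
        OF _ tt', unfolded V[symmetric]] by blast
  have "set Y \<subseteq> {1,2,3}"
    using arg_cong[OF YR(1), of set] set_take_subset[of t' V]
      set_subst_iter_subset[of "[3]" k "Suc d" D] by (auto simp: V_def)
  then have "0 < length (subst_iter k 1 d Y)"
    using subst_iter_ne_Nil[OF _ YR(2)] by blast
  moreover have "length (subst_iter k 1 d (take t' V)) =
      length (subst_iter k 1 d (take t V)) + length (subst_iter k 1 d Y) + length (subst_iter k 1 d R)"
    using YR(1) by simp
  ultimately show False
    using close[folded V_def] YR(3) by linarith
qed

lemma parity_run_of_ones_not_linearly_recurrent:
  assumes LR: "linearly_recurrent_seq L (rho k)"
    and j: "1 \<le> j" "2 \<le> k j" and ones: "\<forall>l. 1 \<le> l \<and> l \<le> 2 * L \<longrightarrow> k (j + 2 * l) = 1"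
  shows False
proof (rule sparse_letter_not_linearly_recurrent[OF LR, of 2 j "2 * (2 * L)"])
  have ones': "\<forall>i<2 * L. k (Suc j + 2 * i + 1) = 1"
  proof (intro allI impI)
    fix i
    assume "i < 2 * L"
    with ones[rule_format, of "Suc i"] show "k (Suc j + 2 * i + 1) = 1"
      by (simp add: algebra_simps)
  qed
  obtain R where R: "subst_iter k (Suc j) (2 * (2 * L)) [2] = R @ [2]" "set R \<subseteq> {1,3}"
    using subst_iter_even_ends_with_2[OF ones'] by blast
  have "L * length (subst_iter k 1 j [2]) \<le> L * (2 * len3 j)"
    using len1_Suc_le_double_len3[OF j] length_subst_iter_2[of j] by simp
  also have "\<dots> \<le> length (subst_iter k 1 j R)"
    using length_before_final_2[OF R(1)] by simp
  finally have long: "L * length (subst_iter k 1 j [2]) \<le> length (subst_iter k 1 j R)" .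
  show "\<forall>c\<in>{1,2,3}. 2 \<in> set (subst_iter k (Suc j) (2 * (2 * L)) [c]) \<longrightarrow>
      (\<exists>R. subst_iter k (Suc j) (2 * (2 * L)) [c] = R @ [2] \<and> 2 \<notin> set R \<and>
         L * length (subst_iter k 1 j [2]) \<le> length (subst_iter k 1 j R))"
  proof (intro ballI impI)
    fix c :: nat
    assume c: "c \<in> {1,2,3}" "2 \<in> set (subst_iter k (Suc j) (2 * (2 * L)) [c])"
    have "c = 2"
    proof (rule ccontr)
      assume "c \<noteq> 2"
      with c(1) have "set (subst_iter k (Suc j) (2 * (2 * L)) [c]) \<subseteq> {1,3}"
        using subst_iter_even_avoids_2[OF ones', of "[c]"] by auto
      with c(2) show False
        by auto
    qed
    with R long show "\<exists>R. subst_iter k (Suc j) (2 * (2 * L)) [c] = R @ [2] \<and> 2 \<notin> set R \<and>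
        L * length (subst_iter k 1 j [2]) \<le> length (subst_iter k 1 j R)"
      by auto
  qed
qed simp

lemma bounded_gaps_if_linearly_recurrent:
  assumes LR: "linearly_recurrent_seq L (rho k)" and "s \<le> 1"
  shows "bounded_gaps {i. i \<ge> 1 \<and> k (2 * i - s) > 1}" (is "bounded_gaps ?E")
proof (rule ccontr)
  assume gaps: "\<not> bounded_gaps ?E"
  have "s = 0 \<or> s = 1"
    using assms(2) by auto
  then have "infinite ?E"
    using infinite_type unfolding infinite_type_coding_def by auto
  then have "?E \<noteq> {}"
    by (rule infinite_imp_nonempty)
  then obtain i0 where i0: "i0 \<in> ?E" "\<forall>i. i0 < i \<and> i \<le> i0 + 2 * L \<longrightarrow> i \<notin> ?E"
    using lonely_element_without_bounded_gaps[OF _ gaps, where M = "2 * L"] by blast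
  have "k (2 * i0 - s + 2 * l) = 1" if "1 \<le> l \<and> l \<le> 2 * L" for l
  proof -
    have "2 * (i0 + l) - s = 2 * i0 - s + 2 * l"
      using i0(1) assms(2) by auto
    moreover have "i0 + l \<notin> ?E"
      using i0(2)[rule_format, of "i0 + l"] that by simp
    moreover have "1 \<le> k (2 * (i0 + l) - s)"
      using k_pos[of "2 * (i0 + l) - s"] assms(2) that by force
    ultimately show ?thesis
      using that by simp
  qed
  moreover have "1 \<le> 2 * i0 - s" "2 \<le> k (2 * i0 - s)"
    using i0(1) assms(2) by auto
  ultimately show False
    using parity_run_of_ones_not_linearly_recurrent[OF LR] by blast
qed

lemma run_of_twos_occurs:
  assumes "1 \<le> b"
  shows "\<exists>D0 t x. 1 \<le> t \<and> x \<in> {1,3} \<and>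
    occurs_at (x # replicate (k (Suc b)) 2) (subst_iter k b D0 [3]) t"
proof -
  obtain D1 where "\<forall>D\<ge>D1. {1,2,3} \<subseteq> set (subst_iter k (Suc (Suc b)) D [3])"
    using all_letters_eventually[of "Suc (Suc b)"] by auto
  then have "2 \<in> set (subst_iter k (Suc (Suc b)) D1 [3])"
    by auto
  then obtain A B where AB: "subst_iter k (Suc (Suc b)) D1 [3] = A @ 2 # B"
    by (meson split_list)
  moreover have "subst_iter k (Suc (Suc b)) D1 [3] ! 0 = 3"
    using subst_iter_3_Cons[of k "Suc (Suc b)" D1] by auto
  ultimately have "A \<noteq> []"
    by auto
  moreover have "set A \<subseteq> {1,2,3}"
    using AB set_subst_iter_subset[of "[3]" k "Suc (Suc b)" D1] by auto
  ultimately have "1 \<le> length (subst_iter k b 2 A)"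
    using subst_iter_ne_Nil[of A k b 2] by (simp add: Suc_le_eq)
  obtain C x where C: "chi (k b) 3 = C @ [x]" and "x \<in> {1,3}"
    by (cases "k b - 1") (auto simp: replicate_append_same[symmetric])
  have "subst_iter k b (2 + D1) [3] = subst_iter k b 2 (subst_iter k (Suc (Suc b)) D1 [3])"
    by (rule subst_iter_split) auto
  also have "\<dots> = (subst_iter k b 2 A @ C) @ (x # replicate (k (Suc b)) 2) @ subst_iter k b 2 B"
    using AB C subst_iter_Cons[of k b 2 2 B] subst_word_replicate_1[of "k b" "k (Suc b)"]
    by (simp add: subst_iter_2)
  finally have "occurs_at (x # replicate (k (Suc b)) 2) (subst_iter k b (2 + D1) [3])
      (length (subst_iter k b 2 A @ C))"
    by (simp only: occurs_at_append)
  moreover have "1 \<le> length (subst_iter k b 2 A @ C)"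
    using \<open>1 \<le> length (subst_iter k b 2 A)\<close> by simp
  ultimately show ?thesis
    using \<open>x \<in> {1,3}\<close> by blast
qed

lemma large_k_not_linearly_recurrent:
  assumes LR: "linearly_recurrent_seq L (rho k)" and a: "2 \<le> a" "2 * L < k a"
  shows False
proof -
  define d where "d = a - 2"
  with a have "a = Suc (Suc d)"
    by simp
  then obtain D0 t x where t: "1 \<le> t" "x \<in> {1,3}"
    and run0: "occurs_at (x # replicate (k a) 2) (subst_iter k (Suc d) D0 [3]) t"
    using run_of_twos_occurs[of "Suc d"] by auto
  from a obtain K' where "k a = Suc K'"
    by (cases "k a") auto
  with run0 have "occurs_at [x, 2] (subst_iter k (Suc d) D0 [3]) t"
    using occurs_at_prefix[of "[x, 2]" "replicate K' 2"] by simp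
  with t obtain D t' where D: "D0 \<le> D" and "t < t'"
    and occ: "occurs_at [x, 2] (subst_iter k (Suc d) D [3]) t'"
    and close: "length (subst_iter k 1 d (take t' (subst_iter k (Suc d) D [3]))) \<le>
      length (subst_iter k 1 d (take t (subst_iter k (Suc d) D [3]))) +
      L * length (subst_iter k 1 d [x, 2])"
    using linearly_recurrent_desubstituted_return[OF LR, of "[x, 2]" t d D0] by auto
  define V where "V = subst_iter k (Suc d) D [3]"
  have run: "occurs_at (x # replicate (k a) 2) V t"
    unfolding V_def using D run0 by (rule occurs_at_subst_iter_3_mono)
  have "t + 1 + k a \<le> t'"
    using occurrence_after_run[OF run _ \<open>t < t'\<close>] occurs_at_length[OF occ] occurs_at_nth[OF occ, of 0] t(2)
    by (auto simp: V_def)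
  with run have "length (subst_iter k 1 d (take t V)) + length (subst_iter k 1 d [x]) + k a * len1 (Suc d)
      \<le> length (subst_iter k 1 d (take t' V))"
    by (rule length_subst_iter_after_run)
  moreover have "L * length (subst_iter k 1 d [x, 2]) = L * (length (subst_iter k 1 d [x]) + len1 (Suc d))"
    using subst_iter_Cons[of k 1 d x "[2]"] length_subst_iter_2[of d] by simp
  moreover have "L * (length (subst_iter k 1 d [x]) + len1 (Suc d)) \<le> L * (2 * len1 (Suc d))"
    using length_letter_le_len1_Suc[OF t(2)] by simp
  moreover have "L * (2 * len1 (Suc d)) < k a * len1 (Suc d)"
    using a(2) len1_pos[of "Suc d"] by simp
  ultimately show False
    using close[folded V_def] by linarith
qed

lemma bounded_if_linearly_recurrent:
  assumes LR: "linearly_recurrent_seq L (rho k)"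
  shows "\<exists>B. \<forall>i\<ge>1. k i \<le> B"
proof -
  have "k i \<le> max (k 1) (2 * L)" if "1 \<le> i" for i
  proof (cases "i = 1")
    case False
    with that have "2 \<le> i"
      by simp
    with large_k_not_linearly_recurrent[OF LR] show ?thesis
      by (cases "2 * L < k i") auto
  qed simp
  then show ?thesis
    by blast
qed

end

section \<open>Bounded coding sequences give linear recurrence\<close>

lemma expanding_in_windows_if_bounded_gaps:
  fixes k :: "nat \<Rightarrow> nat"
  assumes "bounded_gaps {i. i \<ge> 1 \<and> k (2 * i) > 1}" "bounded_gaps {i. i \<ge> 1 \<and> k (2 * i - 1) > 1}"
  shows "\<exists>H. expanding_in_windows k H"
proof -
  obtain g1 where g1: "\<And>n. \<exists>i. i \<ge> 1 \<and> k (2 * i) > 1 \<and> n < i \<and> i \<le> n + g1"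
    using assms(1) unfolding bounded_gaps_def by blast
  obtain g2 where g2: "\<And>n. \<exists>i. i \<ge> 1 \<and> k (2 * i - 1) > 1 \<and> n < i \<and> i \<le> n + g2"
    using assms(2) unfolding bounded_gaps_def by blast
  have "(\<exists>a. even a \<and> x \<le> a \<and> a \<le> x + 2 * (g1 + g2) \<and> 2 \<le> k a) \<and>
    (\<exists>a. odd a \<and> x \<le> a \<and> a \<le> x + 2 * (g1 + g2) \<and> 2 \<le> k a)" for x
  proof
    obtain i where "i \<ge> 1" "k (2 * i) > 1" "x div 2 < i" "i \<le> x div 2 + g1"
      using g1[of "x div 2"] by blast
    then show "\<exists>a. even a \<and> x \<le> a \<and> a \<le> x + 2 * (g1 + g2) \<and> 2 \<le> k a"
      by (intro exI[of _ "2 * i"]) auto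
    obtain i where "i \<ge> 1" "k (2 * i - 1) > 1" "x div 2 < i" "i \<le> x div 2 + g2"
      using g2[of "x div 2"] by blast
    moreover from this have "odd (2 * i - 1)"
      by presburger
    ultimately show "\<exists>a. odd a \<and> x \<le> a \<and> a \<le> x + 2 * (g1 + g2) \<and> 2 \<le> k a"
      by (intro exI[of _ "2 * i - 1"]) auto
  qed
  then show ?thesis
    unfolding expanding_in_windows_def by blast
qed

lemma letter_length_bound:
  assumes "\<forall>i\<ge>1. k i \<le> B" "\<forall>e\<in>{1,2,3}. length (subst_iter k 1 l0 [e]) \<le> n"
    and "l0 \<le> l" "c \<in> {1,2,3}"
  shows "length (subst_iter k 1 l [c]) \<le> (B + 1) ^ (l - l0) * n"
proof -
  define W where "W = subst_iter k (Suc l0) (l - l0) [c]"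
  have "subst_iter k 1 l [c] = subst_iter k 1 l0 W"
    unfolding W_def by (rule subst_iter_split) (use assms(3) in auto)
  moreover have "set W \<subseteq> {1,2,3}"
    unfolding W_def using assms(4) by (intro set_subst_iter_subset) simp
  with assms(2) have "\<forall>e\<in>set W. length (subst_iter k 1 l0 [e]) \<le> n"
    by blast
  ultimately have "length (subst_iter k 1 l [c]) \<le> n * length W"
    using length_subst_iter_le_mult by simp
  moreover have "length W \<le> (B + 1) ^ (l - l0)"
    using length_subst_iter_le_pow[OF assms(1), of "Suc l0" "l - l0" "[c]"] by (simp add: W_def)
  then have "n * length W \<le> n * (B + 1) ^ (l - l0)"
    by (rule mult_le_mono2)
  ultimately have "length (subst_iter k 1 l [c]) \<le> n * (B + 1) ^ (l - l0)"
    by linarith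
  then show ?thesis
    by (simp add: algebra_simps)
qed

context positive_coding
begin

lemma letters_short_below_threshold:
  assumes letters: "blocks_contain_all_letters k G"
    and "0 < n" "\<forall>m'<m. len3 m' < n" "e \<in> {1,2,3}"
  shows "length (subst_iter k 1 (m - 1 - G) [e]) \<le> n"
proof (cases "G + 1 \<le> m")
  case True
  have "subst_iter k 1 (m - 1) [3] = subst_iter k 1 (m - 1 - G) (subst_iter k (m - G) G [3])"
    by (rule subst_iter_split) (use True in auto)
  moreover have "e \<in> set (subst_iter k (m - G) G [3])"
    using letters assms(4) True unfolding blocks_contain_all_letters_def by auto
  ultimately have "length (subst_iter k 1 (m - 1 - G) [e]) \<le> len3 (m - 1)"
    unfolding len3_def by (metis length_letter_le_subst_iter)
  moreover have "len3 (m - 1) < n"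
    using assms(3) True by simp
  ultimately show ?thesis
    by linarith
next
  case False
  with assms(2) show ?thesis
    by simp
qed

lemma letter_lengths_near_threshold:
  assumes "\<forall>i\<ge>1. k i \<le> B"
    and letters: "blocks_contain_all_letters k G"
    and "0 < n" "\<forall>m'<m. len3 m' < n"
    and "m - 1 - G \<le> l" "l \<le> m + 2 + G" "c \<in> {1,2,3}"
  shows "length (subst_iter k 1 l [c]) \<le> (B + 1) ^ (2 * G + 3) * n"
proof -
  have "length (subst_iter k 1 l [c]) \<le> (B + 1) ^ (l - (m - 1 - G)) * n"
    using letter_length_bound[OF assms(1) _ assms(5,7)]
      letters_short_below_threshold[OF letters assms(3,4)] by blast
  moreover have "(B + 1) ^ (l - (m - 1 - G)) \<le> (B + 1) ^ (2 * G + 3)"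
    using assms(6) by (intro power_increasing) auto
  ultimately show ?thesis
    using mult_le_mono1 order_trans by blast
qed

lemma window_returns_early:
  assumes B: "\<forall>i\<ge>1. k i \<le> B"
    and letters: "blocks_contain_all_letters k G"
    and m: "0 < n" "n \<le> len3 m" "\<forall>m'<m. len3 m' < n"
    and V: "set V \<subseteq> {1,2,3}" "i + 2 * ((B + 1) ^ (2 * G + 3) * n) < length (subst_iter k 1 (m + 2 + G) V)"
  shows "\<exists>j. i < j \<and> j < i + 2 * ((B + 1) ^ (2 * G + 3) * n) \<and>
    take n (drop j (subst_iter k 1 (m + 2 + G) V)) = take n (drop i (subst_iter k 1 (m + 2 + G) V))"
proof -
  define C where "C = (B + 1) ^ (2 * G + 3)"
  define T where "T = m + 2 + G"
  have short: "\<forall>c\<in>set W. length (subst_iter k 1 l [c]) \<le> C * n"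
    if "l \<in> {m + 2, T}" "set W \<subseteq> {1,2,3}" for l W
    using letter_lengths_near_threshold[OF B letters m(1,3)] that unfolding C_def T_def by auto
  have V2: "set (subst_iter k (m + 3) G V) \<subseteq> {1,2,3}"
    using V(1) by (rule set_subst_iter_subset)
  have "subst_iter k 1 T V = subst_iter k 1 (m + 2) (subst_iter k (m + 3) G V)"
    unfolding T_def by (rule subst_iter_split) auto
  moreover have len: "i + 2 * (C * n) < length (subst_iter k 1 T V)"
    using V(2) by (simp add: C_def T_def)
  ultimately obtain r where r: "Suc r < length (subst_iter k (m + 3) G V)"
    "length (subst_iter k 1 (m + 2) (take r (subst_iter k (m + 3) G V))) \<le> i"
    "i < length (subst_iter k 1 (m + 2) (take (Suc r) (subst_iter k (m + 3) G V)))"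
    using subst_iter_block_index_not_last[OF short[OF _ V2], of "m + 2" i 1] by auto
  obtain q where q: "Suc (Suc q) < length V" "length (subst_iter k 1 T (take q V)) \<le> i"
    "i < length (subst_iter k 1 T (take (Suc q) V))"
    using subst_iter_block_index_not_last[OF short[OF _ V(1)], of T i 2] len by auto
  have "\<forall>e\<in>{1,2,3}. {1,2,3} \<subseteq> set (subst_iter k (m + 3) G [e])"
    using letters unfolding blocks_contain_all_letters_def by simp
  from window_returns_within_next_block[OF this m(2)[unfolded len3_def] V(1) q(1)
      q(3)[unfolded T_def] r]
  obtain j where j: "i < j" "j < length (subst_iter k 1 T (take (Suc (Suc q)) V))"
    "take n (drop j (subst_iter k 1 T V)) = take n (drop i (subst_iter k 1 T V))"
    unfolding T_def by blast
  have "length (subst_iter k 1 T (take (Suc (Suc q)) V)) =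
      length (subst_iter k 1 T (take q V)) + length (subst_iter k 1 T [V ! q]) +
      length (subst_iter k 1 T [V ! Suc q])"
    using q(1) length_subst_iter_take_Suc[of "Suc q" V k 1 T] length_subst_iter_take_Suc[of q V k 1 T]
    by simp
  moreover have "length (subst_iter k 1 T [V ! q]) \<le> C * n" "length (subst_iter k 1 T [V ! Suc q]) \<le> C * n"
    using short[OF _ V(1), of T] q(1) by simp_all
  ultimately have "j < i + 2 * (C * n)"
    using j(2) q(2) by linarith
  with j(1,3) show ?thesis
    unfolding C_def T_def by blast
qed

end

context infinite_type
begin

lemma least_len3_ge: "\<exists>m. n \<le> len3 m \<and> (\<forall>m'<m. len3 m' < n)"
proof -
  have "\<exists>m. n \<le> len3 m"
    using len3_unbounded[of n] less_imp_le by blast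
  then show ?thesis
    unfolding exists_least_iff[of "\<lambda>m. n \<le> len3 m"] by (auto simp: not_le)
qed

text \<open>A window of length \<open>n\<close> lies in the images of two consecutive letters at the level
  \<open>m + 2\<close>, where \<open>m\<close> is the first level at which the image of 3 has length \<open>n\<close>. The first
  of the two letters recurs in the next block of level \<open>m + 2 + G\<close>, since such blocks
  contain all letters, and bounded \<open>k\<close> makes all these blocks of length \<open>O(n)\<close>.\<close>
lemma linearly_recurrent_if_bounded:
  assumes B: "\<forall>i\<ge>1. k i \<le> B"
    and H: "expanding_in_windows k H"
  shows "linearly_recurrent_seq (2 * (B + 1) ^ (2 * (2 * H + 4) + 3)) (rho k)"
  unfolding linearly_recurrent_seq_def
proof (intro allI impI)
  fix i n :: nat
  assume "1 \<le> i" "0 < n"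
  define G where "G = 2 * H + 4"
  define C where "C = (B + 1) ^ (2 * G + 3)"
  have letters: "blocks_contain_all_letters k G"
    using all_letters_uniform[OF H] by (simp add: G_def)
  obtain m where m: "n \<le> len3 m" "\<forall>m'<m. len3 m' < n"
    using least_len3_ge by blast
  obtain D where D: "i + 2 * (C * n) + n < len3 (m + 2 + G + D)"
    using len3_eventually_gt by blast
  define V where "V = subst_iter k (Suc (m + 2 + G)) D [3]"
  define P where "P = subst_iter k 1 (m + 2 + G) V"
  have P_eq: "subst_iter k 1 (m + 2 + G + D) [3] = P"
    unfolding P_def V_def by (rule subst_iter_3_level_split)
  have len_P: "i + 2 * (C * n) + n < length P"
    using D unfolding len3_def P_eq .
  have "set V \<subseteq> {1,2,3}"
    unfolding V_def by (rule set_subst_iter_subset) simp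
  with len_P obtain j where j: "i < j" "j < i + 2 * (C * n)" "take n (drop j P) = take n (drop i P)"
    using window_returns_early[OF B letters \<open>0 < n\<close> m, of V i] unfolding C_def P_def by auto
  have "rho k (j + m') = rho k (i + m')" if "m' < n" for m'
  proof -
    have "j + n \<le> length P" "i + n \<le> length P"
      using len_P j(2) by linarith+
    with that show ?thesis
      using rho_window_return[of n j k "m + 2 + G + D" i m', unfolded P_eq] j(3) by blast
  qed
  moreover have "j \<le> i + 2 * (B + 1) ^ (2 * (2 * H + 4) + 3) * n"
    using j(2) unfolding C_def G_def by simp
  ultimately show "\<exists>j. i < j \<and> j \<le> i + 2 * (B + 1) ^ (2 * (2 * H + 4) + 3) * n \<and>
      (\<forall>m<n. rho k (j + m) = rho k (i + m))"
    using j(1) by blast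
qed

end

theorem theorem2p6:
  fixes k :: "nat \<Rightarrow> nat"
  assumes "infinite_type_coding k"
  shows "linearly_recurrent (subshift k) \<longleftrightarrow>
           ((\<exists>B. \<forall>i\<ge>1. k i \<le> B)
            \<and> bounded_gaps {i. i \<ge> 1 \<and> k (2 * i) > 1}
            \<and> bounded_gaps {i. i \<ge> 1 \<and> k (2 * i - 1) > 1})"
proof -
  interpret infinite_type k
    by unfold_locales (rule assms)
  show ?thesis
  proof
    assume "linearly_recurrent (subshift k)"
    then obtain L where LR: "linearly_recurrent_seq L (rho k)"
      unfolding subshift_def using linearly_recurrent_seq_if_orbit_closure by blast
    show "(\<exists>B. \<forall>i\<ge>1. k i \<le> B) \<and> bounded_gaps {i. i \<ge> 1 \<and> k (2 * i) > 1}
        \<and> bounded_gaps {i. i \<ge> 1 \<and> k (2 * i - 1) > 1}"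
      using bounded_if_linearly_recurrent[OF LR] bounded_gaps_if_linearly_recurrent[OF LR, of 0]
        bounded_gaps_if_linearly_recurrent[OF LR, of 1] by simp
  next
    assume conditions: "(\<exists>B. \<forall>i\<ge>1. k i \<le> B) \<and> bounded_gaps {i. i \<ge> 1 \<and> k (2 * i) > 1}
        \<and> bounded_gaps {i. i \<ge> 1 \<and> k (2 * i - 1) > 1}"
    then obtain B where B: "\<forall>i\<ge>1. k i \<le> B"
      by blast
    obtain H where H: "expanding_in_windows k H"
      using expanding_in_windows_if_bounded_gaps[of k] conditions by blast
    show "linearly_recurrent (subshift k)"
      unfolding subshift_def
      by (rule linearly_recurrent_orbit_closure_if_seq[OF linearly_recurrent_if_bounded[OF B H]])
  qed
qed

end
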